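(* For $n\ge2$ and $u_1,\dots,u_n\in\mathcal B$, $R_n[X(u_1),\dots,X(u_n)]=\langle R'[u_2,\dots,u_{n-1}](u_n),u_1^*\rangle_\phi=\phi\big[u_1\,R'[u_2,\dots,u_{n-1}](u_n)\big]$, where $\langle f,g\rangle_\phi=\phi[g^*f]$.
   Context: Let $\mathcal B$ be a unital $*$-algebra with star-linear maps $\phi:\mathcal B\to\mathbb C$, $\gamma:\mathcal B\to\mathcal B$, $\Lambda:\mathcal B\otimes_{alg}\mathcal B\to\mathcal B$, where $\phi$ is positive and faithful and $\gamma+\phi$ is completely positive, with $(\gamma+\phi)[b]:=\gamma[b]+\phi[b]1_{\mathcal B}$. Assume $\phi[v^*\Lambda(b\otimes u)]=\phi[\Lambda(b^*\otimes v)^*u]$ and $\gamma[v^*\Lambda(b\otimes u)]=\gamma[\Lambda(b^*\otimes v)^*u]$ for all $b,u,v$. On $\mathcal F_{alg}(\mathcal B)=\mathbb C\Omega\oplus\bigoplus_{n\ge1}\mathcal B^{\otimes n}$ use the form $\langle\Omega,\Omega\rangle_{\gamma,\phi}=1$, $\langle u_1\otimes\cdots\otimes u_n,v_1\otimes\cdots\otimes v_k\rangle_{\gamma,\phi}=\delta_{n=k}\phi[v_n^*(\gamma+\phi)[v_{n-1}^*\cdots(\gamma+\phi)[v_1^*u_1]\cdots u_{n-1}]u_n]$. For $b\in\mathcal B$: $a^+(b)\Omega=b$, $a^+(b)(u_1\otimes\cdots\otimes u_n)=b\otimes u_1\otimes\cdots\otimes u_n$; $a^-(b)\Omega=0$,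 $a^-(b)u_1=\phi[bu_1]\Omega$, $a^-(b)(u_1\otimes\cdots\otimes u_n)=(\gamma+\phi)[bu_1]u_2\otimes\cdots\otimes u_n$ ($n\ge2$); $a^0(b)\Omega=0$, $a^0(b)(u_1\otimes\cdots\otimes u_n)=\Lambda(b\otimes u_1)\otimes u_2\otimes\cdots\otimes u_n$; $X(b)=a^+(b)+a^-(b)+a^0(b)$. Free cumulants $R_k$ w.r.t. $\psi(A)=\langle A\Omega,\Omega\rangle_{\gamma,\phi}$ are defined by $\psi[Y_1\cdots Y_n]=\sum_{\pi\in\mathrm{NC}(n)}\prod_{V\in\pi}R_{|V|}[Y_{V(1)},\dots,Y_{V(|V|)}]$. The linear operators $R'[u_1,\dots,u_k]$ on $\mathcal B$ ($k\ge0$) are defined recursively: $R'[\emptyset]=\mathrm{id}_{\mathcal B}$, and $R'[u_1,\dots,u_k]=\sum_{\pi\in\mathrm{Int}(k)}w(V_1)\circ w(V_2)\circ\cdots\circ w(V_m)$, where $\mathrm{Int}(k)$ is the set of interval partitions of $\{1,\dots,k\}$, $V_1,\dots,V_m$ are the blocks of $\pi$ listed from left to right, $w(\{i\})$ is the operator $v\mapsto\Lambda(u_i\otimes v)$, and for a block $V=\{p,p+1,\dots,q\}$ with $q>p$, $w(V)$ is left multiplication by the element $\gamma\big[u_p\,R'[u_{p+1},\dots,u_{q-1}](u_q)\big]$. *)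

theory Defs
  imports Complex_Main "HOL-Library.Disjoint_Sets"
begin

definition unital_star_algebra :: "(complex \<Rightarrow> 'b::ring_1 \<Rightarrow> 'b) \<Rightarrow> ('b \<Rightarrow> 'b) \<Rightarrow> bool" where
  "unital_star_algebra smul star \<longleftrightarrow>
     (\<forall>c a b. smul c (a + b) = smul c a + smul c b) \<and>
     (\<forall>c d a. smul (c + d) a = smul c a + smul d a) \<and>
     (\<forall>c d a. smul (c * d) a = smul c (smul d a)) \<and>
     (\<forall>a. smul 1 a = a) \<and>
     (\<forall>c a b. smul c (a * b) = smul c a * b) \<and>
     (\<forall>c a b. smul c (a * b) = a * smul c b) \<and>
     (\<forall>a. star (star a) = a) \<and>
     (\<forall>a b. star (a + b) = star a + star b) \<and>
     (\<forall>c a. star (smul c a) = smul (cnj c) (star a)) \<and>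
     (\<forall>a b. star (a * b) = star b * star a)"

definition star_linear_functional ::
  "(complex \<Rightarrow> 'b::ring_1 \<Rightarrow> 'b) \<Rightarrow> ('b \<Rightarrow> 'b) \<Rightarrow> ('b \<Rightarrow> complex) \<Rightarrow> bool" where
  "star_linear_functional smul star \<phi> \<longleftrightarrow>
     (\<forall>a b. \<phi> (a + b) = \<phi> a + \<phi> b) \<and> (\<forall>c a. \<phi> (smul c a) = c * \<phi> a) \<and>
     (\<forall>a. \<phi> (star a) = cnj (\<phi> a))"

definition star_linear_map ::
  "(complex \<Rightarrow> 'b::ring_1 \<Rightarrow> 'b) \<Rightarrow> ('b \<Rightarrow> 'b) \<Rightarrow> ('b \<Rightarrow> 'b) \<Rightarrow> bool" where
  "star_linear_map smul star \<gamma> \<longleftrightarrow>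
     (\<forall>a b. \<gamma> (a + b) = \<gamma> a + \<gamma> b) \<and> (\<forall>c a. \<gamma> (smul c a) = smul c (\<gamma> a)) \<and>
     (\<forall>a. \<gamma> (star a) = star (\<gamma> a))"

text \<open>A linear map on the algebraic tensor product B (x) B is the same as a bilinear map;
  the involution on B (x) B is (b (x) u)^* = b^* (x) u^*.\<close>

definition star_bilinear_map ::
  "(complex \<Rightarrow> 'b::ring_1 \<Rightarrow> 'b) \<Rightarrow> ('b \<Rightarrow> 'b) \<Rightarrow> ('b \<Rightarrow> 'b \<Rightarrow> 'b) \<Rightarrow> bool" where
  "star_bilinear_map smul star \<Lambda> \<longleftrightarrow>
     (\<forall>a a' b. \<Lambda> (a + a') b = \<Lambda> a b + \<Lambda> a' b) \<and>
     (\<forall>a b b'. \<Lambda> a (b + b') = \<Lambda> a b + \<Lambda> a b') \<and>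
     (\<forall>c a b. \<Lambda> (smul c a) b = smul c (\<Lambda> a b)) \<and>
     (\<forall>c a b. \<Lambda> a (smul c b) = smul c (\<Lambda> a b)) \<and>
     (\<forall>a b. \<Lambda> (star a) (star b) = star (\<Lambda> a b))"

definition pos_elems :: "('b::ring_1 \<Rightarrow> 'b) \<Rightarrow> 'b set" where
  "pos_elems star = {x. \<exists>cs. x = sum_list (map (\<lambda>c. star c * c) cs)}"

definition positive_faithful :: "('b::ring_1 \<Rightarrow> 'b) \<Rightarrow> ('b \<Rightarrow> complex) \<Rightarrow> bool" where
  "positive_faithful star \<phi> \<longleftrightarrow>
     (\<forall>b. \<exists>r::real. r \<ge> 0 \<and> \<phi> (star b * b) = complex_of_real r) \<and>
     (\<forall>b. \<phi> (star b * b) = 0 \<longrightarrow> b = 0)"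

definition completely_positive :: "('b::ring_1 \<Rightarrow> 'b) \<Rightarrow> ('b \<Rightarrow> 'b) \<Rightarrow> bool" where
  "completely_positive star T \<longleftrightarrow>
     (\<forall>as bs. length as = length bs \<longrightarrow>
        (\<Sum>i<length as. \<Sum>j<length as. star (bs ! i) * T (star (as ! i) * as ! j) * bs ! j)
          \<in> pos_elems star)"

definition gp :: "(complex \<Rightarrow> 'b::ring_1 \<Rightarrow> 'b) \<Rightarrow> ('b \<Rightarrow> 'b) \<Rightarrow> ('b \<Rightarrow> complex) \<Rightarrow> 'b \<Rightarrow> 'b" where
  "gp smul \<gamma> \<phi> b = \<gamma> b + smul (\<phi> b) 1"

text \<open>Vectors of F_alg(B) are represented by formal finite linear combinations of
  words: the pair (c, [u_1,...,u_n]) stands for c (u_1 (x) ... (x) u_n), and (c, [])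
  stands for c Omega.  Vector addition is list append.  All operators below are the
  linear extensions of the given actions on elementary tensors.\<close>

type_synonym 'b fvec = "(complex \<times> 'b list) list"

definition vac :: "'b fvec" where "vac = [(1, [])]"

fun ipw :: "('b::ring_1 \<Rightarrow> 'b) \<Rightarrow> ('b \<Rightarrow> 'b) \<Rightarrow> 'b \<Rightarrow> ('b \<times> 'b) list \<Rightarrow> 'b" where
  "ipw star T acc [] = acc"
| "ipw star T acc ((u, v) # r) = ipw star T (star v * T acc * u) r"

text \<open>word_ip [u_1..u_n] [v_1..v_k] =
  delta_{n=k} phi[v_n^* T[v_{n-1}^* ... T[v_1^* u_1] ... u_{n-1}] u_n], with T = gamma+phi.\<close>

fun word_ip :: "('b::ring_1 \<Rightarrow> 'b) \<Rightarrow> ('b \<Rightarrow> 'b) \<Rightarrow> ('b \<Rightarrow> complex) \<Rightarrow> 'b list \<Rightarrow> 'b list \<Rightarrow> complex" where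
  "word_ip star T \<phi> [] [] = 1"
| "word_ip star T \<phi> (u # us) (v # vs) =
     (if length us = length vs then \<phi> (ipw star T (star v * u) (zip us vs)) else 0)"
| "word_ip star T \<phi> (u # us) [] = 0"
| "word_ip star T \<phi> [] (v # vs) = 0"

definition fock_ip ::
  "(complex \<Rightarrow> 'b::ring_1 \<Rightarrow> 'b) \<Rightarrow> ('b \<Rightarrow> 'b) \<Rightarrow> ('b \<Rightarrow> 'b) \<Rightarrow> ('b \<Rightarrow> complex)
    \<Rightarrow> 'b fvec \<Rightarrow> 'b fvec \<Rightarrow> complex" where
  "fock_ip smul star \<gamma> \<phi> \<xi> \<eta> =
     sum_list (map (\<lambda>(c, w). sum_list (map (\<lambda>(d, z). c * cnj d * word_ip star (gp smul \<gamma> \<phi>) \<phi> w z) \<eta>)) \<xi>)"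

definition a_plus :: "'b \<Rightarrow> 'b fvec \<Rightarrow> 'b fvec" where
  "a_plus b \<xi> = map (\<lambda>(c, w). (c, b # w)) \<xi>"

fun a_minus_t :: "(complex \<Rightarrow> 'b::ring_1 \<Rightarrow> 'b) \<Rightarrow> ('b \<Rightarrow> 'b) \<Rightarrow> ('b \<Rightarrow> complex) \<Rightarrow> 'b
    \<Rightarrow> complex \<times> 'b list \<Rightarrow> 'b fvec" where
  "a_minus_t smul \<gamma> \<phi> b (c, []) = []"
| "a_minus_t smul \<gamma> \<phi> b (c, [u]) = [(c * \<phi> (b * u), [])]"
| "a_minus_t smul \<gamma> \<phi> b (c, u1 # u2 # w) = [(c, gp smul \<gamma> \<phi> (b * u1) * u2 # w)]"

definition a_minus :: "(complex \<Rightarrow> 'b::ring_1 \<Rightarrow> 'b) \<Rightarrow> ('b \<Rightarrow> 'b) \<Rightarrow> ('b \<Rightarrow> complex) \<Rightarrow> 'b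
    \<Rightarrow> 'b fvec \<Rightarrow> 'b fvec" where
  "a_minus smul \<gamma> \<phi> b \<xi> = concat (map (a_minus_t smul \<gamma> \<phi> b) \<xi>)"

fun a_zero_t :: "('b \<Rightarrow> 'b \<Rightarrow> 'b) \<Rightarrow> 'b \<Rightarrow> complex \<times> 'b list \<Rightarrow> 'b fvec" where
  "a_zero_t \<Lambda> b (c, []) = []"
| "a_zero_t \<Lambda> b (c, u # w) = [(c, \<Lambda> b u # w)]"

definition a_zero :: "('b \<Rightarrow> 'b \<Rightarrow> 'b) \<Rightarrow> 'b \<Rightarrow> 'b fvec \<Rightarrow> 'b fvec" where
  "a_zero \<Lambda> b \<xi> = concat (map (a_zero_t \<Lambda> b) \<xi>)"

definition Xop :: "(complex \<Rightarrow> 'b::ring_1 \<Rightarrow> 'b) \<Rightarrow> ('b \<Rightarrow> 'b) \<Rightarrow> ('b \<Rightarrow> complex)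
    \<Rightarrow> ('b \<Rightarrow> 'b \<Rightarrow> 'b) \<Rightarrow> 'b \<Rightarrow> 'b fvec \<Rightarrow> 'b fvec" where
  "Xop smul \<gamma> \<phi> \<Lambda> b \<xi> = a_plus b \<xi> @ a_minus smul \<gamma> \<phi> b \<xi> @ a_zero \<Lambda> b \<xi>"

definition psi :: "(complex \<Rightarrow> 'b::ring_1 \<Rightarrow> 'b) \<Rightarrow> ('b \<Rightarrow> 'b) \<Rightarrow> ('b \<Rightarrow> 'b) \<Rightarrow> ('b \<Rightarrow> complex)
    \<Rightarrow> ('b fvec \<Rightarrow> 'b fvec) \<Rightarrow> complex" where
  "psi smul star \<gamma> \<phi> A = fock_ip smul star \<gamma> \<phi> (A vac) vac"

text \<open>NC(n): non-crossing partitions of {0,...,n-1} (0-based indices).\<close>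

definition NC :: "nat \<Rightarrow> nat set set set" where
  "NC n = {P. partition_on {0..<n} P \<and>
     (\<forall>V\<in>P. \<forall>W\<in>P. V \<noteq> W \<longrightarrow>
        \<not> (\<exists>a b c d. a < b \<and> b < c \<and> c < d \<and> a \<in> V \<and> c \<in> V \<and> b \<in> W \<and> d \<in> W))}"

text \<open>Interval partitions of {1..k}, listed left to right, correspond to compositions of k
  (lists of positive block sizes summing to k); chunks cuts a list into the blocks.\<close>

definition comps :: "nat \<Rightarrow> nat list set" where
  "comps k = {cs. (\<forall>c\<in>set cs. 0 < c) \<and> sum_list cs = k}"

fun chunks :: "nat list \<Rightarrow> 'a list \<Rightarrow> 'a list list" where
  "chunks [] xs = []"
| "chunks (c # cs) xs = take c xs # chunks cs (drop c xs)"

definition wblk :: "('b::ring_1 \<Rightarrow> 'b \<Rightarrow> 'b) \<Rightarrow> ('b \<Rightarrow> 'b) \<Rightarrow> ('b list \<Rightarrow> 'b \<Rightarrow> 'b)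
    \<Rightarrow> 'b list \<Rightarrow> 'b \<Rightarrow> 'b" where
  "wblk \<Lambda> \<gamma> Rrec blk v =
     (if length blk = 1 then \<Lambda> (hd blk) v
      else \<gamma> (hd blk * Rrec (butlast (tl blk)) (last blk)) * v)"

text \<open>The recursion, with a fuel argument guaranteeing termination (fuel length+1 suffices).\<close>

primrec Rfuel :: "('b::ring_1 \<Rightarrow> 'b \<Rightarrow> 'b) \<Rightarrow> ('b \<Rightarrow> 'b) \<Rightarrow> nat \<Rightarrow> 'b list \<Rightarrow> 'b \<Rightarrow> 'b" where
  "Rfuel \<Lambda> \<gamma> 0 us v = v"
| "Rfuel \<Lambda> \<gamma> (Suc f) us v =
     (if us = [] then v
      else (\<Sum>cs\<in>comps (length us).
              foldr (\<circ>) (map (wblk \<Lambda> \<gamma> (Rfuel \<Lambda> \<gamma> f)) (chunks cs us)) id v))"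

definition Rprime :: "('b::ring_1 \<Rightarrow> 'b \<Rightarrow> 'b) \<Rightarrow> ('b \<Rightarrow> 'b) \<Rightarrow> 'b list \<Rightarrow> 'b \<Rightarrow> 'b" where
  "Rprime \<Lambda> \<gamma> us = Rfuel \<Lambda> \<gamma> (Suc (length us)) us"

definition ip_phi :: "('b::ring_1 \<Rightarrow> 'b) \<Rightarrow> ('b \<Rightarrow> complex) \<Rightarrow> 'b \<Rightarrow> 'b \<Rightarrow> complex" where
  "ip_phi star \<phi> f g = \<phi> (star g * f)"

end

theory Submission
  imports Defs
begin

text \<open>
  The vacuum coefficient of \<open>X(u\<^sub>1)\<cdots>X(u\<^sub>k)\<close> applied to a word is computed by following its
  first letter: the operators to its right act on it through creation, preservation and
  annihilation exactly as in the recursion defining \<open>R'\<close>, except that \<open>\<gamma> + \<phi>\<close> replaces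
  \<open>\<gamma>\<close>, until some \<open>X(u\<^sub>p)\<close> annihilates it. This yields a recursion for the moments in the
  position of that annihilation. Expanding \<open>\<gamma> + \<phi> = \<gamma> + \<phi>(\<cdot>)1\<close> rewrites \<open>R'\<close> built with
  \<open>\<gamma> + \<phi>\<close> as a sum over subsets \<open>T\<close> of \<open>R'\<close> built with \<open>\<gamma>\<close> on \<open>T\<close>, weighted by the
  moments of the gaps left by \<open>T\<close>.

  On the combinatorial side, a non-crossing partition is the block through its maximum
  together with arbitrary non-crossing partitions of the gaps of that block. Hence the sums
  over \<open>NC\<close> of products of \<open>K(v\<^sub>1,\<dots>,v\<^sub>m) = \<phi>[v\<^sub>1 R'[v\<^sub>2,\<dots>,v\<^bsub>m-1\<^esub>](v\<^sub>m)]\<close> (and \<open>K = 0\<close>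
  on singletons) satisfy the same recursion as the moments, so \<open>K\<close> satisfies the
  moment-cumulant formula. As this formula determines the free cumulants, \<open>R\<^sub>n = K\<close>.
\<close>

section \<open>Sublists and sums over subsets\<close>

lemma nths_beyond_length: "\<forall>i\<in>B. length xs \<le> i \<Longrightarrow> nths xs B = []"
  by (simp add: length_nths flip: length_0_conv) (use leD in blast)

lemma nths_union_ordered:
  "\<forall>a\<in>A. \<forall>b\<in>B. a < b \<Longrightarrow> nths xs (A \<union> B) = nths xs A @ nths xs B"
proof (induct xs rule: rev_induct)
  case (snoc x xs)
  show ?case
  proof (cases "length xs \<in> A")
    case True
    then have "length xs \<notin> B" "\<forall>i\<in>B. length xs \<le> i" using snoc.prems by force+
    then show ?thesis using snoc True by (simp add: nths_append nths_beyond_length)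
  qed (use snoc in \<open>simp add: nths_append\<close>)
qed simp

lemma nths_singleton_index: "i < length xs \<Longrightarrow> nths xs {i} = [xs ! i]"
  by (induct xs rule: rev_induct) (auto simp: nths_append nth_append nths_beyond_length)

lemma length_nths_subset: "A \<subseteq> {..<length xs} \<Longrightarrow> length (nths xs A) = card A"
  by (simp add: length_nths Collect_conj_eq Int_absorb1 Collect_mem_eq flip: lessThan_def)

lemma nths_split_at:
  assumes "p \<in> A" "A \<subseteq> {..<length xs}"
  shows "nths xs A = nths xs {x\<in>A. x < p} @ [xs ! p] @ nths xs {x\<in>A. p < x}"
proof -
  have "A = {x\<in>A. x < p} \<union> ({p} \<union> {x\<in>A. p < x})" using assms by auto
  also have "nths xs \<dots> = nths xs {x\<in>A. x < p} @ nths xs {p} @ nths xs {x\<in>A. p < x}"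
    by (subst nths_union_ordered, fastforce)+ (rule refl)
  also have "nths xs {p} = [xs ! p]" using assms by (intro nths_singleton_index) auto
  finally show ?thesis .
qed

lemma nths_snoc_Max:
  assumes "finite S" "S \<noteq> {}" "S \<subseteq> {..<length xs}"
  shows "nths xs S = nths xs (S - {Max S}) @ [xs ! Max S]"
proof -
  have above: "{x\<in>S. Max S < x} = {}" and below: "{x\<in>S. x < Max S} = S - {Max S}"
    using assms by (auto simp: order.not_eq_order_implies_strict)
  show ?thesis
    using nths_split_at[OF Max_in[OF assms(1,2)] assms(3)] unfolding above below by simp
qed

text \<open>Position \<open>q\<close> of \<open>nths xs A\<close> holds the element of \<open>A\<close> with exactly \<open>q\<close> smaller elements.\<close>

lemma sum_positions_nths:
  assumes A: "A \<subseteq> {..<length xs}"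
  shows "(\<Sum>q<length (nths xs A). h (take q (nths xs A)) (nths xs A ! q) (drop (Suc q) (nths xs A)))
       = (\<Sum>p\<in>A. h (nths xs {x\<in>A. x < p}) (xs ! p) (nths xs {x\<in>A. p < x}))"
proof -
  have fin: "finite A" using A finite_subset by blast
  define rk where "rk p = card {x\<in>A. x < p}" for p
  have rk_less: "rk p < rk q" if "p \<in> A" "q \<in> A" "p < q" for p q
  proof -
    have "{x\<in>A. x < p} \<subset> {x\<in>A. x < q}" using that by auto
    then show ?thesis unfolding rk_def by (rule psubset_card_mono[rotated]) (use fin in auto)
  qed
  have inj: "inj_on rk A"
    using rk_less by (intro strict_mono_on_imp_inj_on) (simp add: strict_mono_on_def)
  have img: "rk ` A = {..<card A}"
  proof (rule card_subset_eq)
    have "rk p < card A" if "p \<in> A" for p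
    proof -
      have "{x\<in>A. x < p} \<subset> A" using that by auto
      then show ?thesis unfolding rk_def by (rule psubset_card_mono[OF fin])
    qed
    then show "rk ` A \<subseteq> {..<card A}" by auto
  qed (simp_all add: card_image[OF inj])
  have "(\<Sum>q<length (nths xs A). h (take q (nths xs A)) (nths xs A ! q) (drop (Suc q) (nths xs A)))
      = (\<Sum>p\<in>A. h (take (rk p) (nths xs A)) (nths xs A ! rk p) (drop (Suc (rk p)) (nths xs A)))"
    unfolding length_nths_subset[OF A] img[symmetric] by (rule sum.reindex[OF inj, unfolded comp_def])
  also have "\<dots> = (\<Sum>p\<in>A. h (nths xs {x\<in>A. x < p}) (xs ! p) (nths xs {x\<in>A. p < x}))"
  proof (rule sum.cong[OF refl])
    fix p assume p: "p \<in> A"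
    have l: "length (nths xs {x\<in>A. x < p}) = rk p"
      unfolding rk_def by (rule length_nths_subset) (use A in auto)
    show "h (take (rk p) (nths xs A)) (nths xs A ! rk p) (drop (Suc (rk p)) (nths xs A))
        = h (nths xs {x\<in>A. x < p}) (xs ! p) (nths xs {x\<in>A. p < x})"
      unfolding nths_split_at[OF p A] l[symmetric] by simp
  qed
  finally show ?thesis .
qed

lemma sum_positions_nths_below_Max:
  assumes S: "finite S" "S \<subseteq> {..<length xs}" and n: "n = Max S"
  defines "r \<equiv> nths xs (S - {n})"
  shows "(\<Sum>q<length r. h (take q r) (r ! q) (drop (Suc q) r))
       = (\<Sum>p\<in>S - {n}. h (nths xs {x\<in>S. x < p}) (xs ! p) (nths xs {x\<in>S. p < x \<and> x < n}))"
proof -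
  have less: "p < n" if "p \<in> S - {n}" for p
    using that S(1) n by (simp add: order.not_eq_order_implies_strict)
  have sets: "{x\<in>S - {n}. x < p} = {x\<in>S. x < p}" "{x\<in>S - {n}. p < x} = {x\<in>S. p < x \<and> x < n}"
    if "p \<in> S - {n}" for p
    using that less[OF that] less by force+
  have "(\<Sum>q<length r. h (take q r) (r ! q) (drop (Suc q) r))
      = (\<Sum>p\<in>S - {n}. h (nths xs {x\<in>S - {n}. x < p}) (xs ! p) (nths xs {x\<in>S - {n}. p < x}))"
    unfolding r_def by (rule sum_positions_nths) (use S in auto)
  also have "\<dots> = (\<Sum>p\<in>S - {n}. h (nths xs {x\<in>S. x < p}) (xs ! p) (nths xs {x\<in>S. p < x \<and> x < n}))"
    by (intro sum.cong refl) (simp only: sets)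
  finally show ?thesis .
qed

lemma sum_triangle_shift:
  fixes h :: "nat \<Rightarrow> nat \<Rightarrow> 'a::comm_monoid_add"
  shows "(\<Sum>p'<L. \<Sum>p<p'. h p p') = (\<Sum>p<L. \<Sum>q<L - Suc p. h p (Suc p + q))"
proof (induct L)
  case (Suc L)
  have "(\<Sum>q<Suc L - Suc p. h p (Suc p + q)) = (\<Sum>q<L - Suc p. h p (Suc p + q)) + h p L"
    if "p < L" for p
  proof -
    have "Suc L - Suc p = Suc (L - Suc p)" "Suc (p + (L - Suc p)) = L" using that by auto
    then show ?thesis by simp
  qed
  then show ?case by (simp add: Suc sum.distrib)
qed simp

lemma sum_Pow_by_Max:
  fixes h :: "'b::linorder set \<Rightarrow> 'a::comm_monoid_add"
  assumes "finite X"
  shows "(\<Sum>T\<in>Pow X. h T) = h {} + (\<Sum>t\<in>X. \<Sum>T\<in>Pow {y\<in>X. y < t}. h (insert t T))"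
  using assms
proof (induct X rule: finite_linorder_max_induct)
  case (insert b A)
  have bA: "b \<notin> A" and A_eq: "{y\<in>insert b A. y < b} = A" using insert by auto
  have "(\<Sum>T\<in>Pow (insert b A). h T) = (\<Sum>T\<in>Pow A. h T) + (\<Sum>T\<in>Pow A. h (insert b T))"
  proof -
    have "(\<Sum>T\<in>insert b ` Pow A. h T) = (\<Sum>T\<in>Pow A. h (insert b T))"
      by (rule sum.reindex_cong[where l="insert b"]) (use bA in \<open>auto simp: inj_on_def\<close>)
    then show ?thesis
      unfolding Pow_insert by (subst sum.union_disjoint) (use insert bA in auto)
  qed
  moreover have "{y\<in>A. y < t} = {y\<in>insert b A. y < t}" if "t \<in> A" for t
    using that insert by auto
  ultimately show ?case using insert bA A_eq by (simp add: add_ac)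
qed simp

lemma sum_Pow_by_Min:
  fixes h :: "'b::linorder set \<Rightarrow> 'a::comm_monoid_add"
  assumes "finite X"
  shows "(\<Sum>T\<in>Pow X. h T) = h {} + (\<Sum>t\<in>X. \<Sum>T\<in>Pow {y\<in>X. t < y}. h (insert t T))"
  using assms
proof (induct X rule: finite_linorder_min_induct)
  case (insert b A)
  have bA: "b \<notin> A" and A_eq: "{y\<in>insert b A. b < y} = A" using insert by auto
  have "(\<Sum>T\<in>Pow (insert b A). h T) = (\<Sum>T\<in>Pow A. h T) + (\<Sum>T\<in>Pow A. h (insert b T))"
  proof -
    have "(\<Sum>T\<in>insert b ` Pow A. h T) = (\<Sum>T\<in>Pow A. h (insert b T))"
      by (rule sum.reindex_cong[where l="insert b"]) (use bA in \<open>auto simp: inj_on_def\<close>)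
    then show ?thesis
      unfolding Pow_insert by (subst sum.union_disjoint) (use insert bA in auto)
  qed
  moreover have "{y\<in>A. t < y} = {y\<in>insert b A. t < y}" if "t \<in> A" for t
    using that insert by auto
  ultimately show ?case using insert bA A_eq by (simp add: add_ac)
qed simp

lemma sum_Pow_sum_member:
  fixes h :: "'b::linorder set \<Rightarrow> 'b \<Rightarrow> 'a::comm_monoid_add"
  assumes Y: "finite Y"
  shows "(\<Sum>T\<in>Pow Y. \<Sum>p\<in>T. h T p) =
    (\<Sum>p\<in>Y. \<Sum>T1\<in>Pow {y\<in>Y. y < p}. \<Sum>T2\<in>Pow {y\<in>Y. p < y}. h (T1 \<union> insert p T2) p)"
proof -
  have "(\<Sum>T\<in>Pow Y. \<Sum>p\<in>T. h T p) = (\<Sum>T\<in>Pow Y. \<Sum>p\<in>{p\<in>Y. p \<in> T}. h T p)"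
    by (intro sum.cong refl) auto
  also have "\<dots> = (\<Sum>p\<in>Y. \<Sum>T\<in>{T\<in>Pow Y. p \<in> T}. h T p)"
    by (rule sum.swap_restrict) (use Y in auto)
  also have "\<dots> = (\<Sum>p\<in>Y. \<Sum>(T1, T2)\<in>Pow {y\<in>Y. y < p} \<times> Pow {y\<in>Y. p < y}. h (T1 \<union> insert p T2) p)"
  proof (rule sum.cong[OF refl])
    fix p assume p: "p \<in> Y"
    have decomp: "insert p ({y\<in>T. y < p} \<union> {y\<in>T. p < y}) = T" if "p \<in> T" for T
      using that by auto
    show "(\<Sum>T\<in>{T\<in>Pow Y. p \<in> T}. h T p) =
        (\<Sum>(T1, T2)\<in>Pow {y\<in>Y. y < p} \<times> Pow {y\<in>Y. p < y}. h (T1 \<union> insert p T2) p)"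
      by (rule sum.reindex_bij_witness[where i="\<lambda>(T1, T2). T1 \<union> insert p T2"
            and j="\<lambda>T. ({y\<in>T. y < p}, {y\<in>T. p < y})"]) (use p in \<open>auto simp: subset_eq decomp\<close>)
  qed
  finally show ?thesis by (simp add: sum.cartesian_product)
qed

lemma chunks_snoc: "chunks (cs @ [c]) xs = chunks cs xs @ [take c (drop (sum_list cs) xs)]"
  by (induct cs arbitrary: xs) (auto simp: add.commute)

lemma chunks_take: "sum_list cs \<le> k \<Longrightarrow> chunks cs (take k xs) = chunks cs xs"
proof (induct cs arbitrary: xs k)
  case Nil
  then show ?case by simp
next
  case (Cons c cs)
  then have "chunks cs (take (k - c) (drop c xs)) = chunks cs (drop c xs)" by simp
  with Cons.prems show ?case by (simp add: drop_take min_def)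
qed

lemma length_chunk_le: "blk \<in> set (chunks cs xs) \<Longrightarrow> length blk \<le> length xs"
  by (induct cs arbitrary: xs) (auto, fastforce)

lemma comps_0: "comps 0 = {[]}"
  by (auto simp: comps_def) (metis list.set_intros(1) neq_Nil_conv not_less_zero)

lemma comps_Suc: "comps (Suc k) = (\<Union>p<Suc k. (\<lambda>cs. cs @ [Suc k - p]) ` comps p)"
proof
  show "comps (Suc k) \<subseteq> (\<Union>p<Suc k. (\<lambda>cs. cs @ [Suc k - p]) ` comps p)"
  proof
    fix cs assume cs: "cs \<in> comps (Suc k)"
    then have "cs \<noteq> []" by (auto simp: comps_def)
    then obtain cs' c where e: "cs = cs' @ [c]" by (metis rev_exhaust)
    with cs have c0: "0 < c" and s: "sum_list cs' + c = Suc k" and pos: "\<forall>x\<in>set cs'. 0 < x"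
      by (auto simp: comps_def)
    then have "sum_list cs' < Suc k" "c = Suc k - sum_list cs'" by auto
    moreover have "cs' \<in> comps (sum_list cs')" using pos by (simp add: comps_def)
    ultimately show "cs \<in> (\<Union>p<Suc k. (\<lambda>cs. cs @ [Suc k - p]) ` comps p)"
      unfolding e by blast
  qed
next
  show "(\<Union>p<Suc k. (\<lambda>cs. cs @ [Suc k - p]) ` comps p) \<subseteq> comps (Suc k)"
    by (auto simp: comps_def)
qed

lemma finite_comps: "finite (comps k)"
proof (induct k rule: less_induct)
  case (less k)
  show ?case
  proof (cases k)
    case (Suc k')
    then show ?thesis using less by (simp add: comps_Suc)
  qed (simp add: comps_0)
qed

lemma sum_comps_Suc:
  "(\<Sum>cs\<in>comps (Suc k). h cs) = (\<Sum>p<Suc k. \<Sum>cs\<in>comps p. h (cs @ [Suc k - p]))"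
proof -
  have "(\<Sum>cs\<in>comps (Suc k). h cs) = (\<Sum>p<Suc k. \<Sum>cs\<in>(\<lambda>cs. cs @ [Suc k - p]) ` comps p. h cs)"
    unfolding comps_Suc by (rule sum.UNION_disjoint) (auto simp: finite_comps)
  also have "\<dots> = (\<Sum>p<Suc k. \<Sum>cs\<in>comps p. h (cs @ [Suc k - p]))"
    by (rule sum.cong) (auto simp: sum.reindex inj_on_def)
  finally show ?thesis .
qed

section \<open>Non-crossing partitions\<close>

definition crossing :: "nat set \<Rightarrow> nat set \<Rightarrow> bool" where
  "crossing V W \<longleftrightarrow> (\<exists>a b c d. a < b \<and> b < c \<and> c < d \<and> a \<in> V \<and> c \<in> V \<and> b \<in> W \<and> d \<in> W)"

definition noncrossing :: "nat set set \<Rightarrow> bool" where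
  "noncrossing P \<longleftrightarrow> (\<forall>V\<in>P. \<forall>W\<in>P. V \<noteq> W \<longrightarrow> \<not> crossing V W)"

definition NC_on :: "nat set \<Rightarrow> nat set set set" where
  "NC_on S = {P. partition_on S P \<and> noncrossing P}"

definition block_of :: "nat set set \<Rightarrow> nat \<Rightarrow> nat set" where
  "block_of P x = (THE V. V \<in> P \<and> x \<in> V)"

lemma NC_eq_NC_on: "NC n = NC_on {0..<n}"
  unfolding NC_def NC_on_def noncrossing_def crossing_def by simp

lemma crossing_mono: "crossing V W \<Longrightarrow> V \<subseteq> V' \<Longrightarrow> W \<subseteq> W' \<Longrightarrow> crossing V' W'"
  unfolding crossing_def by blast

lemma not_crossing_singleton: "\<not> crossing {x} W" "\<not> crossing W {x}"
  unfolding crossing_def by auto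

lemma noncrossing_subset: "noncrossing P \<Longrightarrow> Q \<subseteq> P \<Longrightarrow> noncrossing Q"
  unfolding noncrossing_def by blast

lemma partition_on_iff:
  "partition_on S P \<longleftrightarrow> \<Union>P = S \<and> (\<forall>V\<in>P. \<forall>W\<in>P. V \<noteq> W \<longrightarrow> V \<inter> W = {}) \<and> {} \<notin> P"
  unfolding partition_on_def disjoint_def by blast

lemma NC_on_iff: "P \<in> NC_on S \<longleftrightarrow>
    \<Union>P = S \<and> (\<forall>V\<in>P. \<forall>W\<in>P. V \<noteq> W \<longrightarrow> V \<inter> W = {}) \<and> {} \<notin> P \<and> noncrossing P"
  unfolding NC_on_def partition_on_iff by simp

lemma NC_on_blocks_subset: "P \<in> NC_on S \<Longrightarrow> P \<subseteq> Pow S"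
  by (auto simp: NC_on_iff)

lemma finite_NC_on: "finite S \<Longrightarrow> finite (NC_on S)"
  by (meson NC_on_blocks_subset PowI finite_Pow_iff finite_subset subsetI)

lemma finite_NC_on_blocks: "P \<in> NC_on S \<Longrightarrow> finite S \<Longrightarrow> finite P"
  by (meson NC_on_blocks_subset finite_Pow_iff finite_subset)

lemma NC_on_empty: "NC_on {} = {{}}"
  by (auto simp: NC_on_def partition_on_empty noncrossing_def)

lemma block_of_eq:
  "(\<forall>V\<in>P. \<forall>W\<in>P. V \<noteq> W \<longrightarrow> V \<inter> W = {}) \<Longrightarrow> V \<in> P \<Longrightarrow> x \<in> V \<Longrightarrow> block_of P x = V"
  unfolding block_of_def by (rule the_equality) blast+

lemma block_of_in:
  assumes P: "P \<in> NC_on S" and x: "x \<in> S"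
  shows "block_of P x \<in> P \<and> x \<in> block_of P x"
proof -
  obtain V where V: "V \<in> P" "x \<in> V" using P x unfolding NC_on_iff by blast
  have "block_of P x = V" using P V by (intro block_of_eq) (auto simp: NC_on_iff)
  then show ?thesis using V by simp
qed

lemma noncrossing_lift:
  assumes "noncrossing P" and "\<And>V. V \<in> Q \<Longrightarrow> h V \<in> P" "\<And>V. V \<in> Q \<Longrightarrow> V \<subseteq> h V"
    and "inj_on h Q"
  shows "noncrossing Q"
  unfolding noncrossing_def
proof (intro ballI impI notI)
  fix V W assume V: "V \<in> Q" and W: "W \<in> Q" and "V \<noteq> W" and c: "crossing V W"
  then have "h V \<noteq> h W" using assms(4) by (meson inj_on_eq_iff)
  moreover have "crossing (h V) (h W)" using crossing_mono[OF c assms(3)[OF V] assms(3)[OF W]] .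
  ultimately show False using assms(1,2) V W unfolding noncrossing_def by blast
qed

lemma NC_on_remove_singleton:
  assumes P: "P \<in> NC_on S" and n: "{n} \<in> P"
  shows "P - {{n}} \<in> NC_on (S - {n})"
proof -
  have d: "\<forall>V\<in>P. \<forall>W\<in>P. V \<noteq> W \<longrightarrow> V \<inter> W = {}" and u: "\<Union>P = S" and e: "{} \<notin> P" and c: "noncrossing P"
    using P by (auto simp: NC_on_iff)
  have "\<Union>(P - {{n}}) = S - {n}"
  proof
    show "\<Union>(P - {{n}}) \<subseteq> S - {n}"
    proof
      fix x assume "x \<in> \<Union>(P - {{n}})"
      then obtain V where V0: "V \<in> P - {{n}}" and V3: "x \<in> V" by (rule UnionE)
      then have V: "V \<in> P" "V \<noteq> {n}" "x \<in> V" by auto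
      then have "V \<inter> {n} = {}" using d[rule_format, of V "{n}"] n by simp
      then show "x \<in> S - {n}" using V u by blast
    qed
    show "S - {n} \<subseteq> \<Union>(P - {{n}})" using u by blast
  qed
  then show ?thesis using d e noncrossing_subset[OF c] by (auto simp: NC_on_iff)
qed

lemma NC_on_insert_singleton:
  assumes Q: "Q \<in> NC_on (S - {n})" and nS: "n \<in> S"
  shows "insert {n} Q \<in> NC_on S" "{n} \<notin> Q"
proof -
  have u: "\<Union>Q = S - {n}" using Q by (simp add: NC_on_iff)
  show "{n} \<notin> Q" using u by blast
  have disj: "\<forall>V\<in>Q. \<forall>W\<in>Q. V \<noteq> W \<longrightarrow> V \<inter> W = {}" and e: "{} \<notin> Q" and nc: "noncrossing Q"
    using Q by (auto simp: NC_on_iff)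
  have "noncrossing (insert {n} Q)"
    using nc unfolding noncrossing_def by (auto simp: not_crossing_singleton)
  moreover have "\<forall>V\<in>insert {n} Q. \<forall>W\<in>insert {n} Q. V \<noteq> W \<longrightarrow> V \<inter> W = {}"
    using disj u by blast
  moreover have "\<Union>(insert {n} Q) = S" using u nS by blast
  ultimately show "insert {n} Q \<in> NC_on S" using e by (auto simp: NC_on_iff)
qed

lemma NC_on_subfamily:
  assumes "P \<in> NC_on S" "Q \<subseteq> P"
  shows "Q \<in> NC_on (\<Union>Q)"
proof -
  have "\<forall>V\<in>P. \<forall>W\<in>P. V \<noteq> W \<longrightarrow> V \<inter> W = {}" "{} \<notin> P" "noncrossing P"
    using assms(1) by (auto simp: NC_on_iff)
  then show ?thesis using assms(2) noncrossing_subset unfolding NC_on_iff by (meson subsetD)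
qed

lemma NC_on_shrink_block:
  assumes P: "P \<in> NC_on S" and V: "V \<in> P" and V': "V' \<subseteq> V" "V' \<noteq> {}"
  shows "insert V' (P - {V}) \<in> NC_on (\<Union>(insert V' (P - {V})))"
proof -
  define h where "h Z = (if Z = V' then V else Z)" for Z
  have disj: "\<forall>X\<in>P. \<forall>Y\<in>P. X \<noteq> Y \<longrightarrow> X \<inter> Y = {}" and e: "{} \<notin> P" and nc: "noncrossing P"
    using P by (auto simp: NC_on_iff)
  have "V' \<notin> P - {V}"
  proof
    assume "V' \<in> P - {V}"
    then have "V' \<inter> V = {}" using disj V by blast
    then show False using V' by blast
  qed
  then have inj: "inj_on h (insert V' (P - {V}))" unfolding inj_on_def h_def by auto
  have h: "h X \<in> P" "X \<subseteq> h X" if "X \<in> insert V' (P - {V})" for X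
    using that V V' unfolding h_def by auto
  have "X \<inter> Y = {}" if "X \<in> insert V' (P - {V})" "Y \<in> insert V' (P - {V})" "X \<noteq> Y" for X Y
  proof -
    have "h X \<inter> h Y = {}" using disj h(1) that inj by (metis inj_on_contraD)
    then show ?thesis using h(2) that by blast
  qed
  moreover have "noncrossing (insert V' (P - {V}))"
    by (rule noncrossing_lift[OF nc h inj])
  ultimately show ?thesis using e V' by (auto simp: NC_on_iff)
qed

definition split_max_block :: "nat \<Rightarrow> nat \<Rightarrow> nat set set \<Rightarrow> nat set set \<times> nat set set" where
  "split_max_block n c P = (insert (block_of P n - {n}) {V\<in>P. V \<subseteq> {..<c}}, {V\<in>P. V \<subseteq> {c<..<n}})"

definition join_max_block :: "nat \<Rightarrow> nat \<Rightarrow> nat set set \<Rightarrow> nat set set \<Rightarrow> nat set set" where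
  "join_max_block n c P1 P2 = insert (insert n (block_of P1 c)) ((P1 - {block_of P1 c}) \<union> P2)"

locale max_block_split =
  fixes S :: "nat set" and P :: "nat set set" and n c :: nat
  assumes P: "P \<in> NC_on S" and fin: "finite S" and ne: "S \<noteq> {}" and n: "n = Max S"
    and nsing: "{n} \<notin> P" and c: "c = Max (block_of P n - {n})"
begin

lemma n_in_S: "n \<in> S" using fin ne n by simp
lemma le_n: "x \<in> S \<Longrightarrow> x \<le> n" using fin n by simp
lemma disjoint_blocks: "\<forall>V\<in>P. \<forall>W\<in>P. V \<noteq> W \<longrightarrow> V \<inter> W = {}" using P by (simp add: NC_on_iff)
lemma Union_blocks: "\<Union>P = S" using P by (simp add: NC_on_iff)
lemma noncrossing_blocks: "noncrossing P" using P by (simp add: NC_on_iff)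
lemma max_block: "block_of P n \<in> P" "n \<in> block_of P n" using block_of_in[OF P n_in_S] by auto
lemma max_block_subset: "block_of P n \<subseteq> S" using max_block Union_blocks by blast
lemma max_block_rest_ne: "block_of P n - {n} \<noteq> {}"
proof
  assume "block_of P n - {n} = {}"
  then have "block_of P n = {n}" using max_block by blast
  then show False using max_block nsing by simp
qed
lemma finite_max_block_rest: "finite (block_of P n - {n})" using max_block_subset fin finite_subset by blast
lemma c_in_max_block: "c \<in> block_of P n - {n}" unfolding c by (rule Max_in[OF finite_max_block_rest max_block_rest_ne])
lemma le_c: "x \<in> block_of P n - {n} \<Longrightarrow> x \<le> c" using finite_max_block_rest c by simp
lemma c_less_n: "c < n"
proof -
  have "c \<in> S" "c \<noteq> n" using c_in_max_block max_block_subset by auto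
  then show ?thesis using le_n[of c] by simp
qed
lemma c_in_S: "c \<in> S" using c_in_max_block max_block_subset by blast

lemma other_block_below_or_between:
  assumes V: "V \<in> P" "V \<noteq> block_of P n"
  shows "V \<subseteq> {..<c} \<or> V \<subseteq> {c<..<n}"
proof (rule ccontr)
  assume h: "\<not> (V \<subseteq> {..<c} \<or> V \<subseteq> {c<..<n})"
  then have "\<not> V \<subseteq> {..<c}" "\<not> V \<subseteq> {c<..<n}" by auto
  then obtain x y where x: "x \<in> V" "\<not> x < c" and y: "y \<in> V" "\<not> (c < y \<and> y < n)"
    unfolding subset_iff lessThan_iff greaterThanLessThan_iff by blast
  have VB: "V \<inter> block_of P n = {}" using disjoint_blocks[rule_format, OF V(1) max_block(1) V(2)] .
  have cV: "c \<notin> V" using VB c_in_max_block by blast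
  have nV: "n \<notin> V" using VB max_block(2) by blast
  have xS: "x \<in> S" "y \<in> S" using Union_blocks V(1) x(1) y(1) by blast+
  have xn: "x < n" using le_n[OF xS(1)] nV x(1) by (cases "x = n") auto
  have yn: "y < n" using le_n[OF xS(2)] nV y(1) by (cases "y = n") auto
  have cx: "c < x" using x cV by (cases "x = c") auto
  have yc: "y < c" using y yn cV by (cases "y = c") auto
  have "crossing V (block_of P n)" unfolding crossing_def
    by (rule exI[of _ y], rule exI[of _ c], rule exI[of _ x], rule exI[of _ n])
       (use yc cx xn x(1) y(1) c_in_max_block max_block(2) in auto)
  then show False using noncrossing_blocks V max_block unfolding noncrossing_def by blast
qed

lemma split_fst_NC_on: "fst (split_max_block n c P) \<in> NC_on {x\<in>S. x \<le> c}"
proof -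
  let ?B1 = "block_of P n - {n}"
  let ?Q = "{V\<in>P. V \<subseteq> {..<c}}"
  have "\<Union>(insert ?B1 ?Q) = {x\<in>S. x \<le> c}"
  proof
    show "\<Union>(insert ?B1 ?Q) \<subseteq> {x\<in>S. x \<le> c}"
      using le_c max_block_subset Union_blocks by fastforce
    show "{x\<in>S. x \<le> c} \<subseteq> \<Union>(insert ?B1 ?Q)"
    proof
      fix x assume x: "x \<in> {x\<in>S. x \<le> c}"
      then obtain V where V: "V \<in> P" "x \<in> V" using Union_blocks by blast
      show "x \<in> \<Union>(insert ?B1 ?Q)"
      proof (cases "V = block_of P n")
        case True
        then show ?thesis using V x c_less_n by auto
      next
        case False
        then have "V \<subseteq> {..<c} \<or> V \<subseteq> {c<..<n}" using other_block_below_or_between V by blast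
        then show ?thesis using V x by auto
      qed
    qed
  qed
  moreover have "insert ?B1 ?Q \<in> NC_on (\<Union>(insert ?B1 ?Q))"
  proof (rule NC_on_subfamily)
    show "insert ?B1 (P - {block_of P n}) \<in> NC_on (\<Union>(insert ?B1 (P - {block_of P n})))"
      by (rule NC_on_shrink_block[OF P max_block(1) _ max_block_rest_ne]) blast
    show "insert ?B1 ?Q \<subseteq> insert ?B1 (P - {block_of P n})" using c_in_max_block by auto
  qed
  ultimately show ?thesis by (simp add: split_max_block_def)
qed

lemma split_snd_NC_on: "snd (split_max_block n c P) \<in> NC_on {x\<in>S. c < x \<and> x < n}"
proof -
  let ?Q = "{V\<in>P. V \<subseteq> {c<..<n}}"
  have "\<Union>?Q = {x\<in>S. c < x \<and> x < n}"
  proof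
    show "\<Union>?Q \<subseteq> {x\<in>S. c < x \<and> x < n}" using Union_blocks by auto
    show "{x\<in>S. c < x \<and> x < n} \<subseteq> \<Union>?Q"
    proof
      fix x assume x: "x \<in> {x\<in>S. c < x \<and> x < n}"
      then obtain V where V: "V \<in> P" "x \<in> V" using Union_blocks by blast
      have "V \<noteq> block_of P n"
      proof
        assume "V = block_of P n"
        then have "x \<in> block_of P n - {n}" using V x by auto
        then show False using le_c x by force
      qed
      then have "V \<subseteq> {..<c} \<or> V \<subseteq> {c<..<n}" using other_block_below_or_between V by blast
      then show "x \<in> \<Union>?Q" using V x by auto
    qed
  qed
  moreover have "?Q \<in> NC_on (\<Union>?Q)" by (rule NC_on_subfamily[OF P]) blast
  ultimately show ?thesis by (simp add: split_max_block_def)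
qed

lemma join_split: "join_max_block n c (fst (split_max_block n c P)) (snd (split_max_block n c P)) = P"
proof -
  let ?B1 = "block_of P n - {n}"
  let ?Q = "{V\<in>P. V \<subseteq> {..<c}}"
  have dj: "\<forall>V\<in>insert ?B1 ?Q. \<forall>W\<in>insert ?B1 ?Q. V \<noteq> W \<longrightarrow> V \<inter> W = {}"
    using split_fst_NC_on[unfolded split_max_block_def fst_conv NC_on_iff] by (elim conjE) assumption
  have b: "block_of (insert ?B1 ?Q) c = ?B1" by (rule block_of_eq[OF dj]) (use c_in_max_block in auto)
  have q: "insert ?B1 ?Q - {?B1} = ?Q" using c_in_max_block by auto
  have i: "insert n ?B1 = block_of P n" using max_block by auto
  have "insert (block_of P n) (?Q \<union> {V\<in>P. V \<subseteq> {c<..<n}}) = P"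
  proof
    show "insert (block_of P n) (?Q \<union> {V\<in>P. V \<subseteq> {c<..<n}}) \<subseteq> P" using max_block(1) by auto
    show "P \<subseteq> insert (block_of P n) (?Q \<union> {V\<in>P. V \<subseteq> {c<..<n}})"
    proof
      fix V assume V: "V \<in> P"
      show "V \<in> insert (block_of P n) (?Q \<union> {V\<in>P. V \<subseteq> {c<..<n}})"
      proof (cases "V = block_of P n")
        case True then show ?thesis by simp
      next
        case False
        then have "V \<subseteq> {..<c} \<or> V \<subseteq> {c<..<n}" using other_block_below_or_between[OF V] by simp
        then show ?thesis using V by simp
      qed
    qed
  qed
  then show ?thesis unfolding join_max_block_def split_max_block_def fst_conv snd_conv b q i .
qed

end

locale max_block_join =
  fixes S :: "nat set" and P1 P2 :: "nat set set" and n c :: nat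
  assumes P1: "P1 \<in> NC_on {x\<in>S. x \<le> c}" and P2: "P2 \<in> NC_on {x\<in>S. c < x \<and> x < n}"
    and fin: "finite S" and c_in_S: "c \<in> S" and c_less_n: "c < n" and n: "n = Max S"
begin

lemma n_in_S: "n \<in> S" using fin c_in_S n by (metis Max_in empty_iff)
lemma le_n: "x \<in> S \<Longrightarrow> x \<le> n" using fin n by simp
lemma disjoint1: "\<forall>V\<in>P1. \<forall>W\<in>P1. V \<noteq> W \<longrightarrow> V \<inter> W = {}" using P1 by (simp add: NC_on_iff)
lemma Union1: "\<Union>P1 = {x\<in>S. x \<le> c}" using P1 by (simp add: NC_on_iff)
lemma empty_notin1: "{} \<notin> P1" using P1 by (simp add: NC_on_iff)
lemma noncrossing1: "noncrossing P1" using P1 by (simp add: NC_on_iff)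
lemma disjoint2: "\<forall>V\<in>P2. \<forall>W\<in>P2. V \<noteq> W \<longrightarrow> V \<inter> W = {}" using P2 by (simp add: NC_on_iff)
lemma Union2: "\<Union>P2 = {x\<in>S. c < x \<and> x < n}" using P2 by (simp add: NC_on_iff)
lemma empty_notin2: "{} \<notin> P2" using P2 by (simp add: NC_on_iff)
lemma noncrossing2: "noncrossing P2" using P2 by (simp add: NC_on_iff)

abbreviation "B1 \<equiv> block_of P1 c"
lemma c_block: "B1 \<in> P1" "c \<in> B1" using block_of_in[OF P1] c_in_S by auto
lemma mem_P1_block: "U \<in> P1 \<Longrightarrow> x \<in> U \<Longrightarrow> x \<in> S \<and> x \<le> c" using Union1 by blast
lemma mem_P2_block: "W \<in> P2 \<Longrightarrow> x \<in> W \<Longrightarrow> x \<in> S \<and> c < x \<and> x < n" using Union2 by blast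
lemma c_notin_other_block: "U \<in> P1 \<Longrightarrow> U \<noteq> B1 \<Longrightarrow> c \<notin> U" using disjoint1 c_block by blast

lemma join_cases:
  "V \<in> join_max_block n c P1 P2 \<Longrightarrow> V = insert n B1 \<or> (V \<in> P1 \<and> V \<noteq> B1) \<or> V \<in> P2"
  unfolding join_max_block_def by blast

lemma Union_join: "\<Union>(join_max_block n c P1 P2) = S"
proof
  show "\<Union>(join_max_block n c P1 P2) \<subseteq> S"
    unfolding join_max_block_def using n_in_S mem_P1_block mem_P2_block c_block by blast
  show "S \<subseteq> \<Union>(join_max_block n c P1 P2)"
  proof
    fix x assume x: "x \<in> S"
    consider "x = n" | "x \<le> c" | "c < x \<and> x < n" using le_n[OF x] by linarith
    then show "x \<in> \<Union>(join_max_block n c P1 P2)"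
    proof cases
      case 1 then show ?thesis unfolding join_max_block_def by blast
    next
      case 2
      then obtain U where "U \<in> P1" "x \<in> U" using Union1 x by blast
      then show ?thesis unfolding join_max_block_def by blast
    next
      case 3
      then obtain W where "W \<in> P2" "x \<in> W" using Union2 x by blast
      then show ?thesis unfolding join_max_block_def by blast
    qed
  qed
qed

lemma join_disjoint:
  "\<forall>V\<in>join_max_block n c P1 P2. \<forall>W\<in>join_max_block n c P1 P2. V \<noteq> W \<longrightarrow> V \<inter> W = {}"
proof (intro ballI impI)
  fix V W assume V: "V \<in> join_max_block n c P1 P2" and W: "W \<in> join_max_block n c P1 P2"
    and VW: "V \<noteq> W"
  have joined_P1: "insert n B1 \<inter> U = {}" if "U \<in> P1" "U \<noteq> B1" for U
    using that disjoint1 c_block mem_P1_block c_less_n by fastforce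
  have joined_P2: "insert n B1 \<inter> W = {}" if "W \<in> P2" for W
    using that mem_P2_block mem_P1_block c_block by fastforce
  have P1_P2: "U \<inter> W = {}" if "U \<in> P1" "W \<in> P2" for U W
    using that mem_P2_block mem_P1_block by fastforce
  show "V \<inter> W = {}"
    using join_cases[OF V] join_cases[OF W]
  proof (elim disjE conjE)
    assume "V \<in> P1" "V \<noteq> B1" "W \<in> P1" "W \<noteq> B1" then show ?thesis using disjoint1 VW by blast
  next
    assume "V \<in> P2" "W \<in> P2" then show ?thesis using disjoint2 VW by blast
  next
    assume "V \<in> P1" "V \<noteq> B1" "W = insert n B1" then show ?thesis using joined_P1[of V] by blast
  next
    assume "V \<in> P2" "W = insert n B1" then show ?thesis using joined_P2[of V] by blast
  next
    assume "V \<in> P2" "W \<in> P1" "W \<noteq> B1" then show ?thesis using P1_P2[of W V] by blast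
  qed (use VW joined_P1 joined_P2 P1_P2 in auto)
qed

lemma empty_notin_join: "{} \<notin> join_max_block n c P1 P2"
  unfolding join_max_block_def using empty_notin1 empty_notin2 by auto

lemma not_crossing_joined_P1:
  assumes W: "W \<in> P1" "W \<noteq> B1"
  shows "\<not> crossing (insert n B1) W"
proof
  assume "crossing (insert n B1) W"
  then obtain a b c' d where abcd: "a < b" "b < c'" "c' < d" "a \<in> insert n B1" "c' \<in> insert n B1"
      "b \<in> W" "d \<in> W"
    unfolding crossing_def by blast
  have "d \<le> c" using mem_P1_block[OF W(1) abcd(7)] by simp
  then have "a \<in> B1" "c' \<in> B1" using abcd c_less_n by auto
  then have "crossing B1 W" unfolding crossing_def using abcd by blast
  then show False using noncrossing1 c_block(1) W unfolding noncrossing_def by auto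
qed

text \<open>If \<open>V\<close> crosses the joined block through \<open>n\<close>, it already crosses \<open>B1\<close> through \<open>c\<close>.\<close>

lemma not_crossing_P1_joined:
  assumes V: "V \<in> P1" "V \<noteq> B1"
  shows "\<not> crossing V (insert n B1)"
proof
  assume "crossing V (insert n B1)"
  then obtain a b c' d where abcd: "a < b" "b < c'" "c' < d" "a \<in> V" "c' \<in> V"
      "b \<in> insert n B1" "d \<in> insert n B1"
    unfolding crossing_def by blast
  have "c' \<le> c" using mem_P1_block[OF V(1) abcd(5)] by simp
  moreover have "c' \<noteq> c" using c_notin_other_block[OF V] abcd by auto
  ultimately have "b \<in> B1" "c' < c" using abcd c_less_n by auto
  moreover obtain d' where "c' < d'" "d' \<in> B1"
    using abcd \<open>c' < c\<close> c_block by (cases "d = n") auto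
  ultimately have "crossing V B1" unfolding crossing_def using abcd by blast
  then show False using noncrossing1 c_block(1) V unfolding noncrossing_def by auto
qed

lemma not_crossing_joined_P2:
  assumes W: "W \<in> P2"
  shows "\<not> crossing (insert n B1) W" "\<not> crossing W (insert n B1)"
proof -
  show "\<not> crossing (insert n B1) W"
  proof
  assume "crossing (insert n B1) W"
  then obtain a b c' d where abcd: "a < b" "b < c'" "c' < d" "c' \<in> insert n B1" "b \<in> W" "d \<in> W"
    unfolding crossing_def by blast
  have "c < b" "d < n" using mem_P2_block[OF W abcd(5)] mem_P2_block[OF W abcd(6)] by auto
  then have "c' \<in> B1" "c < c'" using abcd by auto
  then show False using mem_P1_block[OF c_block(1)] by force
  qed
  show "\<not> crossing W (insert n B1)"
  proof
  assume "crossing W (insert n B1)"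
  then obtain a b c' d where abcd: "a < b" "b < c'" "a \<in> W" "c' \<in> W" "b \<in> insert n B1"
    unfolding crossing_def by blast
  have "c < a" "c' < n" using mem_P2_block[OF W abcd(3)] mem_P2_block[OF W abcd(4)] by auto
  then have "b \<in> B1" "c < b" using abcd by auto
  then show False using mem_P1_block[OF c_block(1)] by force
  qed
qed

lemma not_crossing_P1_P2:
  assumes "V \<in> P1" "W \<in> P2"
  shows "\<not> crossing V W" "\<not> crossing W V"
  using mem_P1_block[OF assms(1)] mem_P2_block[OF assms(2)] unfolding crossing_def
  by (meson le_less_trans less_trans not_less)+

lemma noncrossing_join: "noncrossing (join_max_block n c P1 P2)"
  unfolding noncrossing_def
proof (intro ballI impI)
  fix V W assume V: "V \<in> join_max_block n c P1 P2" and W: "W \<in> join_max_block n c P1 P2"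
    and VW: "V \<noteq> W"
  show "\<not> crossing V W"
    using join_cases[OF V] join_cases[OF W]
  proof (elim disjE conjE)
    assume "V \<in> P1" "V \<noteq> B1" "W \<in> P1" "W \<noteq> B1"
    then show ?thesis using noncrossing1 VW unfolding noncrossing_def by blast
  next
    assume "V \<in> P2" "W \<in> P2"
    then show ?thesis using noncrossing2 VW unfolding noncrossing_def by blast
  qed (use VW not_crossing_joined_P1 not_crossing_P1_joined not_crossing_joined_P2
      not_crossing_P1_P2 in auto)
qed

lemma join_NC_on: "join_max_block n c P1 P2 \<in> NC_on S"
  unfolding NC_on_iff using Union_join join_disjoint empty_notin_join noncrossing_join by blast

lemma joined_block_notin: "insert n B1 \<notin> (P1 - {B1}) \<union> P2"
  using mem_P1_block mem_P2_block c_less_n by fastforce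

lemma n_notin_other_block: "V \<in> (P1 - {B1}) \<union> P2 \<Longrightarrow> n \<notin> V"
  using mem_P1_block mem_P2_block c_less_n by fastforce

lemma block_of_join: "block_of (join_max_block n c P1 P2) n = insert n B1"
  by (rule block_of_eq[OF join_disjoint]) (auto simp: join_max_block_def)

lemma singleton_notin_join: "{n} \<notin> join_max_block n c P1 P2"
proof
  assume "{n} \<in> join_max_block n c P1 P2"
  then have "{n} = insert n B1 \<or> {n} \<in> (P1 - {B1}) \<union> P2" unfolding join_max_block_def by blast
  then show False using c_block c_less_n n_notin_other_block by auto
qed

lemma Max_block_of_join: "Max (block_of (join_max_block n c P1 P2) n - {n}) = c"
proof -
  have "block_of (join_max_block n c P1 P2) n - {n} = B1" unfolding block_of_join using mem_P1_block[OF c_block(1)] c_less_n by fastforce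
  moreover have "finite B1" using mem_P1_block[OF c_block(1)] fin by (meson finite_subset subsetI)
  ultimately show ?thesis using c_block mem_P1_block[OF c_block(1)] by (simp add: Max_eqI)
qed

lemma P1_P2_disjoint: "(P1 - {B1}) \<inter> P2 = {}"
proof -
  have "V = {}" if "V \<in> P1" "V \<in> P2" for V using that mem_P1_block mem_P2_block by fastforce
  then show ?thesis using empty_notin1 by blast
qed

lemma split_join: "split_max_block n c (join_max_block n c P1 P2) = (P1, P2)"
proof -
  have rest: "block_of (join_max_block n c P1 P2) n - {n} = B1"
    unfolding block_of_join using mem_P1_block[OF c_block(1)] c_less_n by fastforce
  have lower: "{V \<in> join_max_block n c P1 P2. V \<subseteq> {..<c}} = P1 - {B1}"
  proof
    show "{V \<in> join_max_block n c P1 P2. V \<subseteq> {..<c}} \<subseteq> P1 - {B1}"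
    proof
      fix V assume V: "V \<in> {V \<in> join_max_block n c P1 P2. V \<subseteq> {..<c}}"
      then have "V \<noteq> insert n B1" using c_less_n by auto
      moreover have "V \<notin> P2"
      proof
        assume "V \<in> P2"
        then have "V \<noteq> {}" using empty_notin2 by blast
        then obtain x where "x \<in> V" by blast
        then show False using V mem_P2_block[OF \<open>V \<in> P2\<close>] by force
      qed
      ultimately show "V \<in> P1 - {B1}" using V unfolding join_max_block_def by blast
    qed
    show "P1 - {B1} \<subseteq> {V \<in> join_max_block n c P1 P2. V \<subseteq> {..<c}}"
    proof
      fix V assume V: "V \<in> P1 - {B1}"
      have "x < c" if "x \<in> V" for x
        using that V mem_P1_block c_notin_other_block by (fastforce simp: le_less)
      then show "V \<in> {V \<in> join_max_block n c P1 P2. V \<subseteq> {..<c}}"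
        using V unfolding join_max_block_def by blast
    qed
  qed
  have between: "{V \<in> join_max_block n c P1 P2. V \<subseteq> {c<..<n}} = P2"
  proof
    show "{V \<in> join_max_block n c P1 P2. V \<subseteq> {c<..<n}} \<subseteq> P2"
    proof
      fix V assume V: "V \<in> {V \<in> join_max_block n c P1 P2. V \<subseteq> {c<..<n}}"
      then have "V \<noteq> insert n B1" by auto
      moreover have "V \<notin> P1"
      proof
        assume "V \<in> P1"
        then have "V \<noteq> {}" using empty_notin1 by blast
        then obtain x where "x \<in> V" by blast
        then show False using mem_P1_block \<open>V \<in> P1\<close> V by fastforce
      qed
      ultimately show "V \<in> P2" using V unfolding join_max_block_def by blast
    qed
    show "P2 \<subseteq> {V \<in> join_max_block n c P1 P2. V \<subseteq> {c<..<n}}"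
      using mem_P2_block unfolding join_max_block_def by fastforce
  qed
  have "insert B1 (P1 - {B1}) = P1" using c_block by blast
  then show ?thesis unfolding split_max_block_def rest lower between by simp
qed
end

lemma (in max_block_split) max_block_weight_split:
  fixes f g :: "nat set \<Rightarrow> 'a::comm_monoid_mult"
  defines "P1 \<equiv> fst (split_max_block n c P)" and "P2 \<equiv> snd (split_max_block n c P)"
  shows "g (block_of P n) * (\<Prod>V\<in>P - {block_of P n}. f V)
       = g (insert n (block_of P1 c)) * (\<Prod>V\<in>P1 - {block_of P1 c}. f V) * (\<Prod>V\<in>P2. f V)"
proof -
  interpret joined: max_block_join S P1 P2 n c
    unfolding P1_def P2_def using split_fst_NC_on split_snd_NC_on fin c_in_S c_less_n n
    by unfold_locales auto
  have P_eq: "P = join_max_block n c P1 P2" unfolding P1_def P2_def using join_split by simp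
  have rest: "P - {block_of P n} = (P1 - {block_of P1 c}) \<union> P2"
    using P_eq joined.block_of_join joined.joined_block_notin unfolding join_max_block_def
    by (metis Diff_insert_absorb)
  have "finite P1" "finite P2"
    unfolding P1_def P2_def using split_fst_NC_on split_snd_NC_on fin finite_NC_on_blocks by simp_all
  then show ?thesis
    unfolding rest using P_eq joined.block_of_join joined.P1_P2_disjoint
    by (simp add: prod.union_disjoint mult.assoc)
qed

lemma sum_NC_on_singleton_max_block:
  fixes f g :: "nat set \<Rightarrow> 'a::comm_semiring_1"
  assumes n: "n \<in> S"
  shows "(\<Sum>P\<in>{P\<in>NC_on S. {n} \<in> P}. g (block_of P n) * (\<Prod>V\<in>P - {block_of P n}. f V))
       = g {n} * (\<Sum>Q\<in>NC_on (S - {n}). \<Prod>V\<in>Q. f V)"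
  unfolding sum_distrib_left
proof (rule sum.reindex_bij_witness[where i="insert {n}" and j="\<lambda>P. P - {{n}}"])
  fix P assume P: "P \<in> {P\<in>NC_on S. {n} \<in> P}"
  then show "insert {n} (P - {{n}}) = P" by auto
  show "P - {{n}} \<in> NC_on (S - {n})" using P NC_on_remove_singleton by auto
  have "block_of P n = {n}" using P by (intro block_of_eq) (auto simp: NC_on_iff)
  then show "g {n} * (\<Prod>V\<in>P - {{n}}. f V) = g (block_of P n) * (\<Prod>V\<in>P - {block_of P n}. f V)"
    by simp
next
  fix Q assume Q: "Q \<in> NC_on (S - {n})"
  show "insert {n} Q - {{n}} = Q" using NC_on_insert_singleton(2)[OF Q n] by simp
  show "insert {n} Q \<in> {P\<in>NC_on S. {n} \<in> P}" using NC_on_insert_singleton(1)[OF Q n] by simp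
qed

text \<open>Partitions in which \<open>n = Max S\<close> is not a singleton are classified by the largest
  element \<open>c\<close> of the rest of its block; they correspond bijectively to pairs of partitions of
  the elements up to \<open>c\<close> and of those strictly between \<open>c\<close> and \<open>n\<close>.\<close>

lemma sum_NC_on_max_block_second:
  fixes f g :: "nat set \<Rightarrow> 'a::comm_semiring_1"
  assumes fin: "finite S" and n: "n = Max S" and c: "c \<in> S - {n}"
  shows "(\<Sum>P\<in>{P\<in>NC_on S. {n} \<notin> P \<and> Max (block_of P n - {n}) = c}.
            g (block_of P n) * (\<Prod>V\<in>P - {block_of P n}. f V))
       = (\<Sum>P1\<in>NC_on {x\<in>S. x \<le> c}. g (insert n (block_of P1 c)) * (\<Prod>V\<in>P1 - {block_of P1 c}. f V))
         * (\<Sum>P2\<in>NC_on {x\<in>S. c < x \<and> x < n}. \<Prod>V\<in>P2. f V)"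
proof -
  have ne: "S \<noteq> {}" and c_less_n: "c < n"
    using c fin n by (auto simp: order.not_eq_order_implies_strict)
  have "(\<Sum>P\<in>{P\<in>NC_on S. {n} \<notin> P \<and> Max (block_of P n - {n}) = c}.
            g (block_of P n) * (\<Prod>V\<in>P - {block_of P n}. f V))
      = (\<Sum>(P1, P2)\<in>NC_on {x\<in>S. x \<le> c} \<times> NC_on {x\<in>S. c < x \<and> x < n}.
           g (insert n (block_of P1 c)) * (\<Prod>V\<in>P1 - {block_of P1 c}. f V) * (\<Prod>V\<in>P2. f V))"
  proof (rule sum.reindex_bij_witness[where i="\<lambda>(P1, P2). join_max_block n c P1 P2"
        and j="split_max_block n c"])
    fix P assume "P \<in> {P\<in>NC_on S. {n} \<notin> P \<and> Max (block_of P n - {n}) = c}"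
    then interpret max_block_split S P n c using fin ne n by unfold_locales auto
    show "(case split_max_block n c P of (P1, P2) \<Rightarrow> join_max_block n c P1 P2) = P"
      using join_split by (simp add: case_prod_beta)
    show "split_max_block n c P \<in> NC_on {x\<in>S. x \<le> c} \<times> NC_on {x\<in>S. c < x \<and> x < n}"
      using split_fst_NC_on split_snd_NC_on by (simp add: mem_Times_iff)
    show "(case split_max_block n c P of (P1, P2) \<Rightarrow>
            g (insert n (block_of P1 c)) * (\<Prod>V\<in>P1 - {block_of P1 c}. f V) * (\<Prod>V\<in>P2. f V))
        = g (block_of P n) * (\<Prod>V\<in>P - {block_of P n}. f V)"
      using max_block_weight_split[of g f] by (simp add: case_prod_beta)
  next
    fix b assume b: "b \<in> NC_on {x\<in>S. x \<le> c} \<times> NC_on {x\<in>S. c < x \<and> x < n}"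
    obtain P1 P2 where b_eq: "b = (P1, P2)" by (cases b)
    interpret max_block_join S P1 P2 n c using b b_eq fin c c_less_n n by unfold_locales auto
    show "split_max_block n c (case b of (P1, P2) \<Rightarrow> join_max_block n c P1 P2) = b"
      unfolding b_eq using split_join by simp
    show "(case b of (P1, P2) \<Rightarrow> join_max_block n c P1 P2)
        \<in> {P\<in>NC_on S. {n} \<notin> P \<and> Max (block_of P n - {n}) = c}"
      unfolding b_eq using join_NC_on singleton_notin_join Max_block_of_join by simp
  qed
  then show ?thesis by (simp add: sum.cartesian_product sum_product)
qed

lemma sum_NC_on_by_max_block:
  fixes f g :: "nat set \<Rightarrow> 'a::comm_semiring_1"
  assumes fin: "finite S" and ne: "S \<noteq> {}" and n: "n = Max S"
  shows "(\<Sum>P\<in>NC_on S. g (block_of P n) * (\<Prod>V\<in>P - {block_of P n}. f V)) =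
    g {n} * (\<Sum>Q\<in>NC_on (S - {n}). \<Prod>V\<in>Q. f V) +
    (\<Sum>c\<in>S - {n}. (\<Sum>P1\<in>NC_on {x\<in>S. x \<le> c}. g (insert n (block_of P1 c)) * (\<Prod>V\<in>P1 - {block_of P1 c}. f V)) *
       (\<Sum>P2\<in>NC_on {x\<in>S. c < x \<and> x < n}. \<Prod>V\<in>P2. f V))"
proof -
  define w where "w P = g (block_of P n) * (\<Prod>V\<in>P - {block_of P n}. f V)" for P
  define second where "second P = Max (block_of P n - {n})" for P
  define A1 where "A1 = {P\<in>NC_on S. {n} \<notin> P}"
  have nS: "n \<in> S" using fin ne n by simp
  have "(\<Sum>P\<in>NC_on S. w P) = (\<Sum>P\<in>{P\<in>NC_on S. {n} \<in> P}. w P) + (\<Sum>P\<in>A1. w P)"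
    unfolding A1_def using finite_NC_on[OF fin] by (subst sum.union_disjoint[symmetric]) (auto intro: sum.cong)
  also have "(\<Sum>P\<in>A1. w P) = (\<Sum>c\<in>S - {n}. \<Sum>P\<in>{P\<in>A1. second P = c}. w P)"
  proof (rule sum.group[symmetric])
    show "finite A1" using finite_NC_on[OF fin] by (simp add: A1_def)
    show "second ` A1 \<subseteq> S - {n}"
    proof
      fix y assume "y \<in> second ` A1"
      then obtain P where P: "P \<in> A1" and y: "y = second P" by blast
      interpret max_block_split S P n "second P"
        using P fin ne n by unfold_locales (auto simp: A1_def second_def)
      show "y \<in> S - {n}" unfolding y using c_in_S c_less_n by simp
    qed
  qed (use fin in simp)
  also have "\<dots> = (\<Sum>c\<in>S - {n}. \<Sum>P\<in>{P\<in>NC_on S. {n} \<notin> P \<and> Max (block_of P n - {n}) = c}. w P)"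
    by (simp add: A1_def second_def conj_assoc)
  also have "\<dots> = (\<Sum>c\<in>S - {n}.
      (\<Sum>P1\<in>NC_on {x\<in>S. x \<le> c}. g (insert n (block_of P1 c)) * (\<Prod>V\<in>P1 - {block_of P1 c}. f V)) *
      (\<Sum>P2\<in>NC_on {x\<in>S. c < x \<and> x < n}. \<Prod>V\<in>P2. f V))"
    unfolding w_def by (rule sum.cong[OF refl], rule sum_NC_on_max_block_second[OF fin n])
  finally show ?thesis unfolding w_def sum_NC_on_singleton_max_block[OF nS] .
qed

definition gap :: "nat set \<Rightarrow> nat set \<Rightarrow> nat \<Rightarrow> nat set" where
  "gap X T x = {y\<in>X. y < x \<and> (\<forall>t\<in>T. t < x \<longrightarrow> t < y)}"

definition above :: "nat set \<Rightarrow> nat set \<Rightarrow> nat set" where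
  "above X T = {y\<in>X. \<forall>t\<in>T. t < y}"

definition nc_sum :: "(nat set \<Rightarrow> 'a::comm_semiring_1) \<Rightarrow> nat set \<Rightarrow> 'a" where
  "nc_sum f X = (\<Sum>P\<in>NC_on X. \<Prod>V\<in>P. f V)"

definition max_block_sum ::
  "(nat set \<Rightarrow> 'a::comm_semiring_1) \<Rightarrow> (nat set \<Rightarrow> 'a) \<Rightarrow> nat set \<Rightarrow> nat \<Rightarrow> 'a" where
  "max_block_sum f g X n = (\<Sum>T\<in>Pow (X - {n}). g (insert n T) * (\<Prod>x\<in>insert n T. nc_sum f (gap X (insert n T) x)))"

lemma gap_at_new_max:
  assumes "\<forall>t\<in>T. t < c" "c < n" "\<forall>x\<in>X. x \<le> n"
  shows "gap X (insert n (insert c T)) n = {x\<in>X. c < x \<and> x < n}"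
  unfolding gap_def using assms by (auto intro: less_trans)

lemma gap_below_new_max:
  assumes "x \<le> c" "c < n"
  shows "gap X (insert n T) x = gap {y\<in>X. y \<le> c} T x"
  unfolding gap_def using assms by (intro set_eqI) auto

lemma nc_sum_empty[simp]: "nc_sum f {} = 1"
  by (simp add: nc_sum_def NC_on_empty)

lemma prod_nc_sum_gap_insert_max:
  assumes fin: "finite X" and le: "\<forall>x\<in>X. x \<le> n" and c: "c < n" and T: "T \<subseteq> {x\<in>X. x \<le> c} - {c}"
  shows "(\<Prod>x\<in>insert n (insert c T). nc_sum f (gap X (insert n (insert c T)) x))
       = nc_sum f {x\<in>X. c < x \<and> x < n} * (\<Prod>x\<in>insert c T. nc_sum f (gap {x\<in>X. x \<le> c} (insert c T) x))"
proof -
  have "finite T" using T fin by (auto intro: finite_subset)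
  moreover have "n \<notin> insert c T" using T c by auto
  moreover have "gap X (insert n (insert c T)) n = {x\<in>X. c < x \<and> x < n}"
    using T c le by (intro gap_at_new_max) auto
  moreover have "gap X (insert n (insert c T)) x = gap {x\<in>X. x \<le> c} (insert c T) x"
    if "x \<in> insert c T" for x
    using that T c by (intro gap_below_new_max) auto
  ultimately show ?thesis by simp
qed

lemma max_block_sum_peel:
  assumes fin: "finite X" and ne: "X \<noteq> {}" and n: "n = Max X"
  shows "max_block_sum f g X n = g {n} * nc_sum f (X - {n}) +
    (\<Sum>c\<in>X - {n}. max_block_sum f (\<lambda>V. g (insert n V)) {x\<in>X. x \<le> c} c * nc_sum f {x\<in>X. c < x \<and> x < n})"
proof -
  have le: "\<forall>x\<in>X. x \<le> n" using fin n by simp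
  define h where "h T = g (insert n T) * (\<Prod>x\<in>insert n T. nc_sum f (gap X (insert n T) x))" for T
  have inner: "(\<Sum>T\<in>Pow {y\<in>X - {n}. y < c}. h (insert c T)) =
      max_block_sum f (\<lambda>V. g (insert n V)) {x\<in>X. x \<le> c} c * nc_sum f {x\<in>X. c < x \<and> x < n}"
    if c: "c \<in> X - {n}" for c
  proof -
    have cn: "c < n" using c le by force
    have below_c: "{y\<in>X - {n}. y < c} = {x\<in>X. x \<le> c} - {c}" using cn by auto
    show ?thesis
      unfolding max_block_sum_def h_def sum_distrib_right below_c
      by (intro sum.cong refl) (simp add: prod_nc_sum_gap_insert_max[OF fin le cn] mult_ac)
  qed
  have "max_block_sum f g X n = h {} + (\<Sum>c\<in>X - {n}. \<Sum>T\<in>Pow {y\<in>X - {n}. y < c}. h (insert c T))"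
    unfolding max_block_sum_def h_def[symmetric] by (rule sum_Pow_by_Max) (use fin in simp)
  also have "h {} = g {n} * nc_sum f (X - {n})"
  proof -
    have "gap X {n} n = X - {n}" using le by (force simp: gap_def)
    then show ?thesis by (simp add: h_def)
  qed
  also have "(\<Sum>c\<in>X - {n}. \<Sum>T\<in>Pow {y\<in>X - {n}. y < c}. h (insert c T)) =
      (\<Sum>c\<in>X - {n}. max_block_sum f (\<lambda>V. g (insert n V)) {x\<in>X. x \<le> c} c * nc_sum f {x\<in>X. c < x \<and> x < n})"
    by (rule sum.cong[OF refl inner])
  finally show ?thesis .
qed

lemma sum_NC_on_weighted_eq_max_block_sum:
  assumes "finite X" "X \<noteq> {}" "n = Max X"
  shows "(\<Sum>P\<in>NC_on X. g (block_of P n) * (\<Prod>V\<in>P - {block_of P n}. f V)) = max_block_sum f g X n"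
  using assms
proof (induct "card X" arbitrary: X g n rule: less_induct)
  case less
  have fin: "finite X" and ne: "X \<noteq> {}" and n: "n = Max X" using less.prems by auto
  have le: "\<And>x. x \<in> X \<Longrightarrow> x \<le> n" using fin n by simp
  have nX: "n \<in> X" using fin ne n by simp
  have "(\<Sum>P\<in>NC_on X. g (block_of P n) * (\<Prod>V\<in>P - {block_of P n}. f V)) =
    g {n} * nc_sum f (X - {n}) +
    (\<Sum>c\<in>X - {n}. (\<Sum>P1\<in>NC_on {x\<in>X. x \<le> c}. g (insert n (block_of P1 c)) * (\<Prod>V\<in>P1 - {block_of P1 c}. f V)) *
       nc_sum f {x\<in>X. c < x \<and> x < n})"
    unfolding nc_sum_def by (rule sum_NC_on_by_max_block[OF fin ne n])
  also have "\<dots> = g {n} * nc_sum f (X - {n}) +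
    (\<Sum>c\<in>X - {n}. max_block_sum f (\<lambda>V. g (insert n V)) {x\<in>X. x \<le> c} c * nc_sum f {x\<in>X. c < x \<and> x < n})"
  proof (intro arg_cong2[where f="(+)"] refl sum.cong)
    fix c assume c: "c \<in> X - {n}"
    have cn: "c < n" using c le by force
    have sub: "{x\<in>X. x \<le> c} \<subset> X"
    proof -
      have "n \<notin> {x\<in>X. x \<le> c}" using cn by simp
      then show ?thesis using nX by blast
    qed
    have card: "card {x\<in>X. x \<le> c} < card X" using psubset_card_mono[OF fin sub] .
    have mx: "c = Max {x\<in>X. x \<le> c}" using c fin by (intro Max_eqI[symmetric]) auto
    have "(\<Sum>P1\<in>NC_on {x\<in>X. x \<le> c}. g (insert n (block_of P1 c)) * (\<Prod>V\<in>P1 - {block_of P1 c}. f V))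
        = max_block_sum f (\<lambda>V. g (insert n V)) {x\<in>X. x \<le> c} c"
      using less.hyps[OF card, of c "\<lambda>V. g (insert n V)"] fin c mx by auto
    then show "(\<Sum>P1\<in>NC_on {x\<in>X. x \<le> c}. g (insert n (block_of P1 c)) * (\<Prod>V\<in>P1 - {block_of P1 c}. f V)) *
       nc_sum f {x\<in>X. c < x \<and> x < n} = max_block_sum f (\<lambda>V. g (insert n V)) {x\<in>X. x \<le> c} c * nc_sum f {x\<in>X. c < x \<and> x < n}"
      by simp
  qed
  also have "\<dots> = max_block_sum f g X n" by (rule max_block_sum_peel[OF fin ne n, symmetric])
  finally show ?case .
qed

lemma nc_sum_by_max_block:
  assumes fin: "finite X" and ne: "X \<noteq> {}" and n: "n = Max X"
  shows "nc_sum f X =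
    (\<Sum>T\<in>Pow (X - {n}). f (insert n T) * (\<Prod>x\<in>insert n T. nc_sum f (gap X (insert n T) x)))"
proof -
  have nX: "n \<in> X" using fin ne n by simp
  have "nc_sum f X = (\<Sum>P\<in>NC_on X. f (block_of P n) * (\<Prod>V\<in>P - {block_of P n}. f V))"
    unfolding nc_sum_def
  proof (rule sum.cong[OF refl])
    fix P assume P: "P \<in> NC_on X"
    show "(\<Prod>V\<in>P. f V) = f (block_of P n) * (\<Prod>V\<in>P - {block_of P n}. f V)"
      using block_of_in[OF P nX] finite_NC_on_blocks[OF P fin] by (simp add: prod.remove)
  qed
  also have "\<dots> = max_block_sum f f X n" by (rule sum_NC_on_weighted_eq_max_block_sum[OF fin ne n])
  finally show ?thesis unfolding max_block_sum_def .
qed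

lemma single_block_NC: "0 < n \<Longrightarrow> {{0..<n}} \<in> NC n"
  unfolding NC_eq_NC_on NC_on_def noncrossing_def by (auto intro: partition_on_space)

lemma block_of_NC_proper:
  assumes P: "P \<in> NC n" and V: "V \<in> P" and ne: "P \<noteq> {{0..<n}}"
  shows "V \<noteq> {}" "V \<subset> {0..<n}"
proof -
  have u: "\<Union>P = {0..<n}" and d: "\<forall>V\<in>P. \<forall>W\<in>P. V \<noteq> W \<longrightarrow> V \<inter> W = {}" and e: "{} \<notin> P"
    using P by (auto simp: NC_eq_NC_on NC_on_iff)
  show "V \<noteq> {}" using e V by auto
  have "V \<noteq> {0..<n}"
  proof
    assume Vn: "V = {0..<n}"
    have "W = V" if "W \<in> P" for W
    proof (rule ccontr)
      assume "W \<noteq> V"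
      then have "W \<inter> V = {}" using d that V by auto
      moreover have "W \<subseteq> V" using u that Vn by auto
      ultimately have "W = {}" by blast
      then show False using e that by simp
    qed
    then have "P = {V}" using V by blast
    then show False using ne Vn by simp
  qed
  then show "V \<subset> {0..<n}" using u V by auto
qed

text \<open>Free cumulants are determined by the moment-cumulant formula: the only partition in
  \<open>NC n\<close> involving the full list is the one-block partition, all other blocks are shorter.\<close>

lemma free_cumulants_unique:
  fixes R K :: "'a list \<Rightarrow> 'c::comm_semiring_1_cancel"
  assumes mc: "\<And>xs. xs \<noteq> [] \<Longrightarrow>
      (\<Sum>P\<in>NC (length xs). \<Prod>V\<in>P. R (nths xs V)) = (\<Sum>P\<in>NC (length xs). \<Prod>V\<in>P. K (nths xs V))"
  shows "xs \<noteq> [] \<Longrightarrow> R xs = K xs"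
proof (induct "length xs" arbitrary: xs rule: less_induct)
  case less
  define n where "n = length xs"
  have n0: "0 < n" using less.prems by (simp add: n_def)
  have fin: "finite (NC n)" unfolding NC_eq_NC_on by (rule finite_NC_on) simp
  have all: "nths xs {0..<n} = xs" by (simp add: n_def atLeast0LessThan)
  have split: "(\<Sum>P\<in>NC n. \<Prod>V\<in>P. F (nths xs V)) = F xs + (\<Sum>P\<in>NC n - {{{0..<n}}}. \<Prod>V\<in>P. F (nths xs V))"
    for F :: "'a list \<Rightarrow> 'c"
    using sum.remove[OF fin single_block_NC[OF n0], of "\<lambda>P. \<Prod>V\<in>P. F (nths xs V)"] by (simp add: all)
  have "R (nths xs V) = K (nths xs V)" if "P \<in> NC n - {{{0..<n}}}" "V \<in> P" for P V
  proof -
    have V: "V \<noteq> {}" "V \<subset> {0..<n}" using block_of_NC_proper[of P n V] that by auto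
    then have "length (nths xs V) = card V"
      by (intro length_nths_subset) (auto simp: n_def)
    moreover have "card V < n" "card V \<noteq> 0"
      using V psubset_card_mono[of "{0..<n}" V] finite_subset[of V "{0..<n}"] by auto
    ultimately have "length (nths xs V) < length xs" "nths xs V \<noteq> []"
      by (auto simp: n_def simp flip: length_greater_0_conv)
    then show ?thesis by (rule less.hyps)
  qed
  then have "(\<Sum>P\<in>NC n - {{{0..<n}}}. \<Prod>V\<in>P. R (nths xs V)) = (\<Sum>P\<in>NC n - {{{0..<n}}}. \<Prod>V\<in>P. K (nths xs V))"
    by (intro sum.cong prod.cong) auto
  then show ?case using mc[OF less.prems] split[of R] split[of K] by (simp add: n_def)
qed

section \<open>The operators \<open>R'\<close>\<close>

lemma foldr_comp_id: "foldr (\<circ>) fs g = foldr (\<circ>) fs id \<circ> g"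
  by (induct fs) auto

lemma foldr_comp_map_snoc:
  "foldr (\<circ>) (map W (xs @ [x])) id v = foldr (\<circ>) (map W xs) id (W x v)"
  using foldr_comp_id[of "map W xs" "W x"] by (simp del: foldr_map)

lemma Rfuel_Suc: "Rfuel L g (Suc f) us v =
   (\<Sum>cs\<in>comps (length us). foldr (\<circ>) (map (wblk L g (Rfuel L g f)) (chunks cs us)) id v)"
  by (cases "us = []") (auto simp: comps_0)

lemma Rfuel_Nil[simp]: "Rfuel L g f [] v = v"
  by (cases f) auto

lemma Rfuel_indep: "length us < f \<Longrightarrow> length us < f' \<Longrightarrow> Rfuel L g f us = Rfuel L g f' us"
proof (induct "length us" arbitrary: us f f' rule: less_induct)
  case less
  obtain f0 f0' where f0: "f = Suc f0" and f0': "f' = Suc f0'"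
    using less.prems by (cases f; cases f') auto
  show ?case
  proof (cases "us = []")
    case True
    then show ?thesis unfolding f0 f0' by (simp add: fun_eq_iff)
  next
    case False
    have "wblk L g (Rfuel L g f0) blk = wblk L g (Rfuel L g f0') blk"
      if "blk \<in> set (chunks cs us)" for cs blk
    proof -
      have "length (butlast (tl blk)) < length us" "length (butlast (tl blk)) < f0"
        "length (butlast (tl blk)) < f0'"
        using length_chunk_le[OF that] False less.prems f0 f0' by (auto simp: neq_Nil_conv)
      then have "Rfuel L g f0 (butlast (tl blk)) = Rfuel L g f0' (butlast (tl blk))"
        using less.hyps by blast
      then show ?thesis by (simp add: wblk_def fun_eq_iff)
    qed
    then have "map (wblk L g (Rfuel L g f0)) (chunks cs us) = map (wblk L g (Rfuel L g f0')) (chunks cs us)"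
      for cs by (rule map_cong[OF refl])
    then show ?thesis unfolding f0 f0' by (intro ext) (simp only: Rfuel_Suc)
  qed
qed

lemma Rfuel_eq_Rprime: "length us < f \<Longrightarrow> Rfuel L g f us = Rprime L g us"
  unfolding Rprime_def by (rule Rfuel_indep) auto

lemma Rprime_Nil[simp]: "Rprime L g [] v = v"
  by (simp add: Rprime_def)

lemma Rprime_unfold:
  "Rprime L g us v =
     (\<Sum>cs\<in>comps (length us). foldr (\<circ>) (map (wblk L g (Rprime L g)) (chunks cs us)) id v)"
proof -
  have "wblk L g (Rfuel L g (length us)) blk = wblk L g (Rprime L g) blk"
    if "blk \<in> set (chunks cs us)" for cs blk
  proof (cases blk)
    case (Cons b bs)
    have "length (butlast (tl blk)) < length us" using length_chunk_le[OF that] Cons by auto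
    then have "Rfuel L g (length us) (butlast (tl blk)) = Rprime L g (butlast (tl blk))"
      by (rule Rfuel_eq_Rprime)
    then show ?thesis by (simp add: wblk_def fun_eq_iff)
  qed (simp add: wblk_def fun_eq_iff)
  then have "map (wblk L g (Rfuel L g (length us))) (chunks cs us) = map (wblk L g (Rprime L g)) (chunks cs us)"
    for cs by (rule map_cong[OF refl])
  then show ?thesis unfolding Rprime_def by (simp only: Rfuel_Suc)
qed

text \<open>Recursion on the last letter: either \<open>u\<close> is a singleton block, acting by \<open>\<Lambda>\<close>, or it
  closes the last block, which starts at some position \<open>p\<close>.\<close>

lemma Rprime_snoc: "Rprime L g (ms @ [u]) v = Rprime L g ms (L u v) +
   (\<Sum>p<length ms. Rprime L g (take p ms) (g (ms ! p * Rprime L g (drop (Suc p) ms) u) * v))"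
proof -
  define k where "k = length ms"
  define W where "W = wblk L g (Rprime L g)"
  have "Rprime L g (ms @ [u]) v
      = (\<Sum>p<Suc k. \<Sum>cs\<in>comps p. foldr (\<circ>) (map W (chunks (cs @ [Suc k - p]) (ms @ [u]))) id v)"
    unfolding Rprime_unfold[of L g "ms @ [u]"] W_def k_def by (simp add: sum_comps_Suc)
  also have "\<dots> = (\<Sum>p<Suc k. Rprime L g (take p ms) (W (drop p ms @ [u]) v))"
  proof (rule sum.cong[OF refl])
    fix p assume p: "p \<in> {..<Suc k}"
    have "chunks (cs @ [Suc k - p]) (ms @ [u]) = chunks cs (take p ms) @ [drop p ms @ [u]]"
      if "cs \<in> comps p" for cs
      using that p chunks_take[of cs p "ms @ [u]"] by (simp add: comps_def chunks_snoc k_def)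
    then have "(\<Sum>cs\<in>comps p. foldr (\<circ>) (map W (chunks (cs @ [Suc k - p]) (ms @ [u]))) id v)
        = (\<Sum>cs\<in>comps p. foldr (\<circ>) (map W (chunks cs (take p ms))) id (W (drop p ms @ [u]) v))"
      by (intro sum.cong refl) (simp only: foldr_comp_map_snoc)
    also have "\<dots> = Rprime L g (take p ms) (W (drop p ms @ [u]) v)"
      using p by (simp only: Rprime_unfold[of L g "take p ms"] W_def length_take k_def min_absorb2 less_Suc_eq_le lessThan_iff)
    finally show "(\<Sum>cs\<in>comps p. foldr (\<circ>) (map W (chunks (cs @ [Suc k - p]) (ms @ [u]))) id v)
        = Rprime L g (take p ms) (W (drop p ms @ [u]) v)" .
  qed
  also have "\<dots> = Rprime L g ms (L u v) +
      (\<Sum>p<k. Rprime L g (take p ms) (g (ms ! p * Rprime L g (drop (Suc p) ms) u) * v))"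
  proof -
    have "drop p ms @ [u] = ms ! p # (drop (Suc p) ms @ [u])" if "p < k" for p
      using that by (simp add: Cons_nth_drop_Suc k_def)
    then show ?thesis by (simp add: W_def wblk_def k_def add.commute)
  qed
  finally show ?thesis by (simp add: k_def)
qed

locale fock_setting =
  fixes smul :: "complex \<Rightarrow> 'b::ring_1 \<Rightarrow> 'b" and star :: "'b \<Rightarrow> 'b"
    and \<phi> :: "'b \<Rightarrow> complex" and \<gamma> :: "'b \<Rightarrow> 'b" and \<Lambda> :: "'b \<Rightarrow> 'b \<Rightarrow> 'b"
  assumes alg: "unital_star_algebra smul star"
    and phi_lin: "star_linear_functional smul star \<phi>"
    and gamma_lin: "star_linear_map smul star \<gamma>"
    and Lambda_lin: "star_bilinear_map smul star \<Lambda>"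
begin

lemma smul_add: "smul c (a + b) = smul c a + smul c b"
  using alg unfolding unital_star_algebra_def by simp
lemma smul_add_left: "smul (c + d) a = smul c a + smul d a"
  using alg unfolding unital_star_algebra_def by simp
lemma smul_smul: "smul c (smul d a) = smul (c * d) a"
  using alg unfolding unital_star_algebra_def by simp
lemma smul_one[simp]: "smul 1 a = a"
  using alg unfolding unital_star_algebra_def by simp
lemma smul_mult_left: "smul c a * b = smul c (a * b)"
  using alg unfolding unital_star_algebra_def by simp
lemma smul_mult_right: "a * smul c b = smul c (a * b)"
  using alg unfolding unital_star_algebra_def by metis
lemma star_star[simp]: "star (star a) = a"
  using alg unfolding unital_star_algebra_def by simp
lemma smul_zero[simp]: "smul c 0 = 0"
  using smul_add[of c 0 0] by simp
lemma smul_zero_left[simp]: "smul 0 a = 0"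
  using smul_add_left[of 0 0 a] by simp
lemma smul_sum: "smul c (sum f A) = (\<Sum>i\<in>A. smul c (f i))"
  by (induct A rule: infinite_finite_induct) (auto simp: smul_add)
lemma smul_sum_left: "smul (sum f A) a = (\<Sum>i\<in>A. smul (f i) a)"
  by (induct A rule: infinite_finite_induct) (auto simp: smul_add_left)
lemma smul_one_mult: "smul c 1 * x = smul c x"
  by (simp add: smul_mult_left)

lemma phi_add: "\<phi> (a + b) = \<phi> a + \<phi> b"
  using phi_lin unfolding star_linear_functional_def by blast
lemma phi_smul: "\<phi> (smul c a) = c * \<phi> a"
  using phi_lin unfolding star_linear_functional_def by blast
lemma phi_zero[simp]: "\<phi> 0 = 0"
  using phi_add[of 0 0] by simp
lemma phi_sum: "\<phi> (sum f A) = (\<Sum>i\<in>A. \<phi> (f i))"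
  by (induct A rule: infinite_finite_induct) (auto simp: phi_add)

lemma gam_add: "\<gamma> (a + b) = \<gamma> a + \<gamma> b"
  using gamma_lin unfolding star_linear_map_def by blast
lemma gam_smul: "\<gamma> (smul c a) = smul c (\<gamma> a)"
  using gamma_lin unfolding star_linear_map_def by blast
lemma gam_zero[simp]: "\<gamma> 0 = 0"
  using gam_add[of 0 0] by simp
lemma gam_sum: "\<gamma> (sum f A) = (\<Sum>i\<in>A. \<gamma> (f i))"
  by (induct A rule: infinite_finite_induct) (auto simp: gam_add)

lemma lam_add: "\<Lambda> a (b + b') = \<Lambda> a b + \<Lambda> a b'"
  using Lambda_lin unfolding star_bilinear_map_def by blast
lemma lam_smul: "\<Lambda> a (smul c b) = smul c (\<Lambda> a b)"
  using Lambda_lin unfolding star_bilinear_map_def by blast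
lemma lam_zero[simp]: "\<Lambda> a 0 = 0"
  using lam_add[of a 0 0] by simp
abbreviation G :: "'b \<Rightarrow> 'b" where "G \<equiv> gp smul \<gamma> \<phi>"

lemma gp_add: "G (a + b) = G a + G b"
  by (simp add: gp_def gam_add phi_add smul_add_left add_ac)
lemma gp_mult: "G x * v = \<gamma> x * v + smul (\<phi> x) v"
  by (simp add: gp_def distrib_right smul_one_mult)

lemma Rprime_add: "Rprime \<Lambda> g us (a + b) = Rprime \<Lambda> g us a + Rprime \<Lambda> g us b"
proof (induct "length us" arbitrary: us a b rule: less_induct)
  case less
  show ?case
  proof (cases us rule: rev_cases)
    case Nil
    then show ?thesis by simp
  next
    case (snoc ms u)
    have IH: "Rprime \<Lambda> g ys (x + y) = Rprime \<Lambda> g ys x + Rprime \<Lambda> g ys y" if "length ys < length us" for ys x y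
      using less that by blast
    have IH2: "Rprime \<Lambda> g (take p ms) (x + y) = Rprime \<Lambda> g (take p ms) x + Rprime \<Lambda> g (take p ms) y" for p x y
      by (rule IH) (simp add: snoc)
    have IH3: "Rprime \<Lambda> g ms (x + y) = Rprime \<Lambda> g ms x + Rprime \<Lambda> g ms y" for x y
      by (rule IH) (simp add: snoc)
    show ?thesis unfolding snoc Rprime_snoc
      by (simp add: lam_add IH2 IH3 distrib_left sum.distrib algebra_simps)
  qed
qed

lemma Rprime_smul: "Rprime \<Lambda> g us (smul c a) = smul c (Rprime \<Lambda> g us a)"
proof (induct "length us" arbitrary: us a rule: less_induct)
  case less
  show ?case
  proof (cases us rule: rev_cases)
    case Nil
    then show ?thesis by simp
  next
    case (snoc ms u)
    have IH: "Rprime \<Lambda> g ys (smul c x) = smul c (Rprime \<Lambda> g ys x)" if "length ys < length us" for ys x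
      using less that by blast
    have IH2: "Rprime \<Lambda> g (take p ms) (smul c x) = smul c (Rprime \<Lambda> g (take p ms) x)" for p x
      by (rule IH) (simp add: snoc)
    have IH3: "Rprime \<Lambda> g ms (smul c x) = smul c (Rprime \<Lambda> g ms x)" for x
      by (rule IH) (simp add: snoc)
    show ?thesis unfolding snoc Rprime_snoc
      by (simp add: lam_smul IH2 IH3 smul_mult_right smul_add smul_sum)
  qed
qed

lemma Rprime_zero[simp]: "Rprime \<Lambda> g us 0 = 0"
  using Rprime_add[of g us 0 0] by simp

lemma Rprime_sum: "Rprime \<Lambda> g us (sum f A) = (\<Sum>i\<in>A. Rprime \<Lambda> g us (f i))"
  by (induct A rule: infinite_finite_induct) (auto simp: Rprime_add)

end

section \<open>Vacuum coefficients in the Fock space\<close>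

context fock_setting
begin

abbreviation X_op :: "'b \<Rightarrow> 'b fvec \<Rightarrow> 'b fvec" where "X_op \<equiv> Xop smul \<gamma> \<phi> \<Lambda>"

definition omega_coeff_vec :: "'b list \<Rightarrow> 'b fvec \<Rightarrow> complex" where
  "omega_coeff_vec us \<xi> = fock_ip smul star \<gamma> \<phi> (foldr (\<circ>) (map X_op us) id \<xi>) vac"

definition omega_coeff :: "'b list \<Rightarrow> 'b list \<Rightarrow> complex" where
  "omega_coeff us w = omega_coeff_vec us [(1, w)]"

lemma word_ip_Nil_right: "word_ip st T ph w [] = (if w = [] then 1 else 0)"
  by (cases w) auto

lemma fock_ip_vac: "fock_ip smul star \<gamma> \<phi> \<xi> vac = sum_list (map (\<lambda>(c, w). if w = [] then c else 0) \<xi>)"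
  unfolding fock_ip_def vac_def
  by (induct \<xi>) (auto simp: word_ip_Nil_right)

lemma omega_coeff_vec_snoc: "omega_coeff_vec (us @ [u]) \<xi> = omega_coeff_vec us (X_op u \<xi>)"
  unfolding omega_coeff_vec_def by (simp add: foldr_comp_id[of _ "X_op u"])

lemma omega_coeff_vec_Nil: "omega_coeff_vec [] \<xi> = sum_list (map (\<lambda>(c, w). if w = [] then c else 0) \<xi>)"
  unfolding omega_coeff_vec_def by (simp add: fock_ip_vac)

lemma a_plus_append: "a_plus u (\<xi>1 @ \<xi>2) = a_plus u \<xi>1 @ a_plus u \<xi>2"
  by (simp add: a_plus_def)
lemma a_minus_append: "a_minus smul \<gamma> \<phi> u (\<xi>1 @ \<xi>2) = a_minus smul \<gamma> \<phi> u \<xi>1 @ a_minus smul \<gamma> \<phi> u \<xi>2"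
  by (simp add: a_minus_def)
lemma a_zero_append: "a_zero \<Lambda> u (\<xi>1 @ \<xi>2) = a_zero \<Lambda> u \<xi>1 @ a_zero \<Lambda> u \<xi>2"
  by (simp add: a_zero_def)

lemma omega_coeff_vec_append: "omega_coeff_vec us (\<xi>1 @ \<xi>2) = omega_coeff_vec us \<xi>1 + omega_coeff_vec us \<xi>2"
proof (induct us arbitrary: \<xi>1 \<xi>2 rule: rev_induct)
  case Nil
  then show ?case by (simp add: omega_coeff_vec_Nil)
next
  case (snoc u us)
  have "omega_coeff_vec (us @ [u]) (\<xi>1 @ \<xi>2) = omega_coeff_vec us (X_op u (\<xi>1 @ \<xi>2))" by (simp add: omega_coeff_vec_snoc)
  also have "\<dots> = omega_coeff_vec (us @ [u]) \<xi>1 + omega_coeff_vec (us @ [u]) \<xi>2"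
    unfolding omega_coeff_vec_snoc Xop_def by (simp add: snoc add_ac a_plus_append a_minus_append a_zero_append)
  finally show ?case .
qed

definition scale_term :: "complex \<Rightarrow> complex \<times> 'b list \<Rightarrow> complex \<times> 'b list" where
  "scale_term c = (\<lambda>(d, w). (c * d, w))"

lemma a_minus_t_scale: "a_minus_t smul \<gamma> \<phi> b (scale_term c t) = map (scale_term c) (a_minus_t smul \<gamma> \<phi> b t)"
proof -
  obtain d w where t: "t = (d, w)" by (cases t)
  show ?thesis unfolding t scale_term_def
    by (cases w rule: remdups_adj.cases) auto
qed

lemma a_zero_t_scale: "a_zero_t \<Lambda> b (scale_term c t) = map (scale_term c) (a_zero_t \<Lambda> b t)"
proof -
  obtain d w where t: "t = (d, w)" by (cases t)
  show ?thesis unfolding t scale_term_def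
    by (cases w) auto
qed

lemma X_op_scale: "X_op u (map (scale_term c) \<xi>) = map (scale_term c) (X_op u \<xi>)"
proof -
  have 1: "a_minus smul \<gamma> \<phi> u (map (scale_term c) \<xi>) = map (scale_term c) (a_minus smul \<gamma> \<phi> u \<xi>)"
    unfolding a_minus_def by (simp add: a_minus_t_scale map_concat comp_def)
  have 2: "a_zero \<Lambda> u (map (scale_term c) \<xi>) = map (scale_term c) (a_zero \<Lambda> u \<xi>)"
    unfolding a_zero_def by (simp add: a_zero_t_scale map_concat comp_def)
  have 3: "a_plus u (map (scale_term c) \<xi>) = map (scale_term c) (a_plus u \<xi>)"
    unfolding a_plus_def by (simp add: scale_term_def comp_def split_def)
  show ?thesis unfolding Xop_def 1 2 3 by simp
qed

lemma omega_coeff_vec_scale: "omega_coeff_vec us (map (scale_term c) \<xi>) = c * omega_coeff_vec us \<xi>"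
proof (induct us arbitrary: \<xi> rule: rev_induct)
  case Nil
  then show ?case by (induct \<xi>) (auto simp: omega_coeff_vec_Nil scale_term_def distrib_left split: prod.splits)
next
  case (snoc u us)
  then show ?case by (simp add: omega_coeff_vec_snoc X_op_scale)
qed

lemma omega_coeff_vec_single: "omega_coeff_vec us [(c, w)] = c * omega_coeff us w"
  using omega_coeff_vec_scale[of us c "[(1, w)]"] by (simp add: omega_coeff_def scale_term_def)

lemma omega_coeff_Nil: "omega_coeff [] w = (if w = [] then 1 else 0)"
  by (simp add: omega_coeff_def omega_coeff_vec_Nil)

lemma omega_coeff_snoc_Nil: "omega_coeff (us @ [u]) [] = omega_coeff us [u]"
proof -
  have "X_op u [(1, [])] = [(1, [u])]" by (simp add: Xop_def a_plus_def a_minus_def a_zero_def)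
  then show ?thesis by (simp add: omega_coeff_def omega_coeff_vec_snoc)
qed

lemma omega_coeff_snoc_single: "omega_coeff (us @ [u]) [x] = omega_coeff us [u, x] + \<phi> (u * x) * omega_coeff us [] + omega_coeff us [\<Lambda> u x]"
proof -
  have "X_op u [(1, [x])] = [(1, [u, x])] @ [(\<phi> (u * x), [])] @ [(1, [\<Lambda> u x])]"
    by (simp add: Xop_def a_plus_def a_minus_def a_zero_def)
  moreover have "omega_coeff (us @ [u]) w = omega_coeff_vec us (X_op u [(1, w)])" for w by (simp add: omega_coeff_def omega_coeff_vec_snoc)
  ultimately show ?thesis by (simp only: omega_coeff_vec_append omega_coeff_vec_single mult_1 add.assoc)
qed

lemma omega_coeff_snoc_Cons2: "omega_coeff (us @ [u]) (x # y # r) = omega_coeff us (u # x # y # r) + omega_coeff us (G (u * x) * y # r) + omega_coeff us (\<Lambda> u x # y # r)"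
proof -
  have "X_op u [(1, x # y # r)] = [(1, u # x # y # r)] @ [(1, G (u * x) * y # r)] @ [(1, \<Lambda> u x # y # r)]"
    by (simp add: Xop_def a_plus_def a_minus_def a_zero_def)
  moreover have "omega_coeff (us @ [u]) w = omega_coeff_vec us (X_op u [(1, w)])" for w by (simp add: omega_coeff_def omega_coeff_vec_snoc)
  ultimately show ?thesis by (simp only: omega_coeff_vec_append omega_coeff_vec_single mult_1 add.assoc)
qed

lemma omega_coeff_add_snoc_first:
  assumes IH: "\<And>pre a b post. omega_coeff us (pre @ (a + b) # post)
      = omega_coeff us (pre @ a # post) + omega_coeff us (pre @ b # post)"
  shows "omega_coeff (us @ [u]) ((a + b) # post)
      = omega_coeff (us @ [u]) (a # post) + omega_coeff (us @ [u]) (b # post)"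
proof (cases post)
  case Nil
  have "omega_coeff us [u, a + b] = omega_coeff us [u, a] + omega_coeff us [u, b]"
    using IH[of "[u]" a b "[]"] by simp
  moreover have "omega_coeff us [\<Lambda> u (a + b)] = omega_coeff us [\<Lambda> u a] + omega_coeff us [\<Lambda> u b]"
    using IH[of "[]" "\<Lambda> u a" "\<Lambda> u b" "[]"] by (simp add: lam_add)
  ultimately show ?thesis
    unfolding Nil omega_coeff_snoc_single by (simp add: distrib_left phi_add algebra_simps)
next
  case (Cons y r)
  have "omega_coeff us (u # (a + b) # y # r) = omega_coeff us (u # a # y # r) + omega_coeff us (u # b # y # r)"
    using IH[of "[u]" a b "y # r"] by simp
  moreover have "omega_coeff us (G (u * (a + b)) * y # r)
      = omega_coeff us (G (u * a) * y # r) + omega_coeff us (G (u * b) * y # r)"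
    using IH[of "[]" "G (u * a) * y" "G (u * b) * y" r] unfolding distrib_left gp_add distrib_right by simp
  moreover have "omega_coeff us (\<Lambda> u (a + b) # y # r)
      = omega_coeff us (\<Lambda> u a # y # r) + omega_coeff us (\<Lambda> u b # y # r)"
    using IH[of "[]" "\<Lambda> u a" "\<Lambda> u b" "y # r"] by (simp add: lam_add)
  ultimately show ?thesis unfolding Cons omega_coeff_snoc_Cons2 by (simp add: algebra_simps)
qed

lemma omega_coeff_add_snoc_later:
  assumes IH: "\<And>pre a b post. omega_coeff us (pre @ (a + b) # post)
      = omega_coeff us (pre @ a # post) + omega_coeff us (pre @ b # post)"
  shows "omega_coeff (us @ [u]) (x # pre @ (a + b) # post)
      = omega_coeff (us @ [u]) (x # pre @ a # post) + omega_coeff (us @ [u]) (x # pre @ b # post)"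
proof (cases pre)
  case Nil
  have "omega_coeff us (u # x # (a + b) # post) = omega_coeff us (u # x # a # post) + omega_coeff us (u # x # b # post)"
    using IH[of "[u, x]" a b post] by simp
  moreover have "omega_coeff us (G (u * x) * (a + b) # post)
      = omega_coeff us (G (u * x) * a # post) + omega_coeff us (G (u * x) * b # post)"
    using IH[of "[]" "G (u * x) * a" "G (u * x) * b" post] by (simp add: distrib_left)
  moreover have "omega_coeff us (\<Lambda> u x # (a + b) # post)
      = omega_coeff us (\<Lambda> u x # a # post) + omega_coeff us (\<Lambda> u x # b # post)"
    using IH[of "[\<Lambda> u x]" a b post] by simp
  ultimately show ?thesis unfolding Nil append.simps omega_coeff_snoc_Cons2 by (simp add: algebra_simps)
next
  case (Cons y r)
  have "omega_coeff us (u # x # y # r @ (a + b) # post)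
      = omega_coeff us (u # x # y # r @ a # post) + omega_coeff us (u # x # y # r @ b # post)"
    using IH[of "u # x # y # r" a b post] by simp
  moreover have "omega_coeff us (G (u * x) * y # r @ (a + b) # post)
      = omega_coeff us (G (u * x) * y # r @ a # post) + omega_coeff us (G (u * x) * y # r @ b # post)"
    using IH[of "G (u * x) * y # r" a b post] by simp
  moreover have "omega_coeff us (\<Lambda> u x # y # r @ (a + b) # post)
      = omega_coeff us (\<Lambda> u x # y # r @ a # post) + omega_coeff us (\<Lambda> u x # y # r @ b # post)"
    using IH[of "\<Lambda> u x # y # r" a b post] by simp
  ultimately show ?thesis unfolding Cons append.simps omega_coeff_snoc_Cons2 by (simp add: algebra_simps)
qed

lemma omega_coeff_add:
  "omega_coeff us (pre @ (a + b) # post) = omega_coeff us (pre @ a # post) + omega_coeff us (pre @ b # post)"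
proof (induct us arbitrary: pre a b post rule: rev_induct)
  case Nil
  then show ?case by (simp add: omega_coeff_Nil)
next
  case (snoc u us)
  then show ?case
    using omega_coeff_add_snoc_first omega_coeff_add_snoc_later by (cases pre) simp_all
qed

definition annihilation_term :: "'b list \<Rightarrow> nat \<Rightarrow> 'b \<Rightarrow> 'b list \<Rightarrow> complex" where
  "annihilation_term us p x \<rho> = (case \<rho> of [] \<Rightarrow> \<phi> (us ! p * x) * omega_coeff (take p us) []
      | y # \<rho>' \<Rightarrow> omega_coeff (take p us) (G (us ! p * x) * y # \<rho>'))"

lemma annihilation_term_add: "annihilation_term us p (x1 + x2) \<rho> = annihilation_term us p x1 \<rho> + annihilation_term us p x2 \<rho>"
proof (cases \<rho>)
  case Nil
  then show ?thesis by (simp add: annihilation_term_def distrib_left phi_add distrib_right)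
next
  case (Cons y r)
  then show ?thesis using omega_coeff_add[of "take p us" "[]" "G (us ! p * x1) * y" "G (us ! p * x2) * y" r]
    by (simp add: annihilation_term_def distrib_left gp_add distrib_right)
qed

lemma annihilation_term_zero: "annihilation_term us p 0 \<rho> = 0"
  using annihilation_term_add[of us p 0 0 \<rho>] by simp

lemma annihilation_term_sum: "annihilation_term us p (sum f A) \<rho> = (\<Sum>i\<in>A. annihilation_term us p (f i) \<rho>)"
  by (induct A rule: infinite_finite_induct) (auto simp: annihilation_term_zero annihilation_term_add)

lemma annihilation_term_take: "p < q \<Longrightarrow> p < length us \<Longrightarrow> annihilation_term (take q us) p x \<rho> = annihilation_term us p x \<rho>"
  by (simp add: annihilation_term_def min_def split: list.splits)

lemma annihilation_term_snoc: "p < length ms \<Longrightarrow> annihilation_term (ms @ [u]) p x \<rho> = annihilation_term ms p x \<rho>"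
  by (simp add: annihilation_term_def nth_append split: list.splits)

lemma omega_coeff_snoc_Cons:
  "omega_coeff (ms @ [u]) (v # \<rho>) =
     omega_coeff ms (u # v # \<rho>) + annihilation_term (ms @ [u]) (length ms) v \<rho> + omega_coeff ms (\<Lambda> u v # \<rho>)"
  by (cases \<rho>) (simp_all add: annihilation_term_def omega_coeff_snoc_single omega_coeff_snoc_Cons2)

lemma sum_annihilation_terms_snoc:
  "(\<Sum>p<length (ms @ [u]). annihilation_term (ms @ [u]) p (Rprime \<Lambda> G (drop (Suc p) (ms @ [u])) v) \<rho>)
     = (\<Sum>p<length ms. annihilation_term ms p (Rprime \<Lambda> G (drop (Suc p) ms @ [u]) v) \<rho>)
       + annihilation_term (ms @ [u]) (length ms) v \<rho>"
  by (simp add: annihilation_term_snoc)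

lemma sum_annihilation_terms_triangle:
  "(\<Sum>p<length ms. \<Sum>q<length ms - Suc p. annihilation_term ms p (Rprime \<Lambda> G (take q (drop (Suc p) ms))
      (G (drop (Suc p) ms ! q * Rprime \<Lambda> G (drop (Suc q) (drop (Suc p) ms)) u) * v)) \<rho>)
   = (\<Sum>p'<length ms. \<Sum>p<p'. annihilation_term (take p' ms) p (Rprime \<Lambda> G (drop (Suc p) (take p' ms))
      (G (ms ! p' * Rprime \<Lambda> G (drop (Suc p') ms) u) * v)) \<rho>)"
  (is "?lhs = _")
proof -
  have "?lhs = (\<Sum>p<length ms. \<Sum>q<length ms - Suc p. annihilation_term ms p (Rprime \<Lambda> G (drop (Suc p) (take (Suc p + q) ms))
      (G (ms ! (Suc p + q) * Rprime \<Lambda> G (drop (Suc (Suc p + q)) ms) u) * v)) \<rho>)"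
    by (intro sum.cong refl) (simp add: drop_take nth_drop add.commute)
  also have "\<dots> = (\<Sum>p'<length ms. \<Sum>p<p'. annihilation_term ms p (Rprime \<Lambda> G (drop (Suc p) (take p' ms))
      (G (ms ! p' * Rprime \<Lambda> G (drop (Suc p') ms) u) * v)) \<rho>)"
    by (rule sum_triangle_shift[symmetric])
  also have "\<dots> = (\<Sum>p'<length ms. \<Sum>p<p'. annihilation_term (take p' ms) p (Rprime \<Lambda> G (drop (Suc p) (take p' ms))
      (G (ms ! p' * Rprime \<Lambda> G (drop (Suc p') ms) u) * v)) \<rho>)"
    by (intro sum.cong refl) (simp add: annihilation_term_take)
  finally show ?thesis .
qed

theorem omega_coeff_Cons:
  "omega_coeff us (v # \<rho>) = (\<Sum>p<length us. annihilation_term us p (Rprime \<Lambda> G (drop (Suc p) us) v) \<rho>)"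
proof (induct "length us" arbitrary: us v \<rho> rule: less_induct)
  case less
  show ?case
  proof (cases us rule: rev_cases)
    case Nil
    then show ?thesis by (simp add: omega_coeff_Nil)
  next
    case (snoc ms u)
    have IH: "omega_coeff ys (x # r) = (\<Sum>p<length ys. annihilation_term ys p (Rprime \<Lambda> G (drop (Suc p) ys) x) r)"
      if "length ys \<le> length ms" for ys x r
      using less that snoc by simp
    have created: "omega_coeff ms (u # v # \<rho>) =
        (\<Sum>p<length ms. \<Sum>q<length ms - Suc p. annihilation_term ms p (Rprime \<Lambda> G (take q (drop (Suc p) ms))
          (G (drop (Suc p) ms ! q * Rprime \<Lambda> G (drop (Suc q) (drop (Suc p) ms)) u) * v)) \<rho>)"
    proof -
      have "omega_coeff ms (u # v # \<rho>) = (\<Sum>p'<length ms.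
          omega_coeff (take p' ms) (G (ms ! p' * Rprime \<Lambda> G (drop (Suc p') ms) u) * v # \<rho>))"
        using IH[of ms u "v # \<rho>"] by (simp add: annihilation_term_def)
      also have "\<dots> = (\<Sum>p'<length ms. \<Sum>p<p'. annihilation_term (take p' ms) p
          (Rprime \<Lambda> G (drop (Suc p) (take p' ms)) (G (ms ! p' * Rprime \<Lambda> G (drop (Suc p') ms) u) * v)) \<rho>)"
      proof (rule sum.cong[OF refl])
        fix p' assume "p' \<in> {..<length ms}"
        then show "omega_coeff (take p' ms) (G (ms ! p' * Rprime \<Lambda> G (drop (Suc p') ms) u) * v # \<rho>)
            = (\<Sum>p<p'. annihilation_term (take p' ms) p
                (Rprime \<Lambda> G (drop (Suc p) (take p' ms)) (G (ms ! p' * Rprime \<Lambda> G (drop (Suc p') ms) u) * v)) \<rho>)"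
          using IH[of "take p' ms" "G (ms ! p' * Rprime \<Lambda> G (drop (Suc p') ms) u) * v" \<rho>] by simp
      qed
      finally show ?thesis unfolding sum_annihilation_terms_triangle .
    qed
    have "(\<Sum>p<length us. annihilation_term us p (Rprime \<Lambda> G (drop (Suc p) us) v) \<rho>)
       = (\<Sum>p<length ms. annihilation_term ms p (Rprime \<Lambda> G (drop (Suc p) ms @ [u]) v) \<rho>)
         + annihilation_term (ms @ [u]) (length ms) v \<rho>"
      unfolding snoc by (rule sum_annihilation_terms_snoc)
    also have "\<dots> = omega_coeff ms (\<Lambda> u v # \<rho>) + omega_coeff ms (u # v # \<rho>)
         + annihilation_term (ms @ [u]) (length ms) v \<rho>"
      using IH[of ms "\<Lambda> u v" \<rho>]
      by (simp add: created Rprime_snoc annihilation_term_add annihilation_term_sum sum.distrib)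
    finally show ?thesis unfolding snoc omega_coeff_snoc_Cons by (simp add: add_ac)
  qed
qed
text \<open>The first cumulant vanishes: \<open>X(u)\<Omega> = u\<close> has no vacuum component.\<close>

definition cumulant_formula :: "'b list \<Rightarrow> complex" where
  "cumulant_formula us = (if length us < 2 then 0 else \<phi> (hd us * Rprime \<Lambda> \<gamma> (butlast (tl us)) (last us)))"

end

section \<open>Moments and the expansion of \<open>\<gamma> + \<phi>\<close>\<close>

locale fock_word = fock_setting smul star \<phi> \<gamma> \<Lambda>
  for smul :: "complex \<Rightarrow> 'b::ring_1 \<Rightarrow> 'b" and star \<phi> \<gamma> \<Lambda> +
  fixes ws :: "'b list"
begin

definition moment :: "nat set \<Rightarrow> complex" where "moment S = omega_coeff (nths ws S) []"
definition R_gp :: "nat set \<Rightarrow> 'b \<Rightarrow> 'b" where "R_gp X = Rprime \<Lambda> G (nths ws X)"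
definition R_gamma :: "nat set \<Rightarrow> 'b \<Rightarrow> 'b" where "R_gamma X = Rprime \<Lambda> \<gamma> (nths ws X)"

lemma moment_empty[simp]: "moment {} = 1"
  by (simp add: moment_def omega_coeff_Nil)

lemma moment_rec:
  assumes S: "S \<noteq> {}" "S \<subseteq> {..<length ws}" and n: "n = Max S"
  shows "moment S = (\<Sum>p\<in>S - {n}. \<phi> (ws ! p * R_gp {x\<in>S. p < x \<and> x < n} (ws ! n)) * moment {x\<in>S. x < p})"
proof -
  have fin: "finite S" using S finite_subset by blast
  define r where "r = nths ws (S - {n})"
  have "moment S = omega_coeff (r @ [ws ! n]) []"
    unfolding moment_def r_def n by (subst nths_snoc_Max[OF fin S]) simp
  also have "\<dots> = omega_coeff r [ws ! n]" by (rule omega_coeff_snoc_Nil)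
  also have "\<dots> = (\<Sum>q<length r. \<phi> (r ! q * Rprime \<Lambda> G (drop (Suc q) r) (ws ! n)) * omega_coeff (take q r) [])"
    by (simp add: omega_coeff_Cons annihilation_term_def)
  also have "\<dots> = (\<Sum>p\<in>S - {n}. \<phi> (ws ! p * R_gp {x\<in>S. p < x \<and> x < n} (ws ! n)) * moment {x\<in>S. x < p})"
    unfolding r_def
    using sum_positions_nths_below_Max[OF fin S(2) n, of "\<lambda>A x B. \<phi> (x * Rprime \<Lambda> G B (ws ! n)) * omega_coeff A []"]
    by (simp add: R_gp_def moment_def)
  finally show ?thesis .
qed

lemma Rprime_nths_rec:
  assumes S: "S \<noteq> {}" "S \<subseteq> {..<length ws}" and n: "n = Max S"
  shows "Rprime \<Lambda> g (nths ws S) v = Rprime \<Lambda> g (nths ws (S - {n})) (\<Lambda> (ws ! n) v)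
     + (\<Sum>p\<in>S - {n}. Rprime \<Lambda> g (nths ws {x\<in>S. x < p})
          (g (ws ! p * Rprime \<Lambda> g (nths ws {x\<in>S. p < x \<and> x < n}) (ws ! n)) * v))"
proof -
  have fin: "finite S" using S finite_subset by blast
  have "nths ws S = nths ws (S - {n}) @ [ws ! n]"
    unfolding n by (rule nths_snoc_Max[OF fin S])
  then show ?thesis
    using sum_positions_nths_below_Max[OF fin S(2) n,
        of "\<lambda>A x B. Rprime \<Lambda> g A (g (x * Rprime \<Lambda> g B (ws ! n)) * v)"]
    by (simp add: Rprime_snoc)
qed

definition expansion_weight :: "nat set \<Rightarrow> nat set \<Rightarrow> complex" where
  "expansion_weight X T = moment (above X T) * (\<Prod>x\<in>T. moment (gap X T x))"

definition R_expansion :: "nat set \<Rightarrow> 'b \<Rightarrow> 'b" where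
  "R_expansion X v = (\<Sum>T\<in>Pow X. smul (expansion_weight X T) (R_gamma T v))"

lemma expansion_weight_empty: "expansion_weight X {} = moment X"
  by (simp add: expansion_weight_def above_def)

lemma expansion_weight_insert_Max:
  assumes "t \<in> X" "\<forall>x\<in>T'. x < t" "finite T'"
  shows "expansion_weight X (insert t T') = moment {y\<in>X. t < y} * expansion_weight {y\<in>X. y < t} T'"
proof -
  have tT: "t \<notin> T'" using assms by auto
  have a: "above X (insert t T') = {y\<in>X. t < y}"
    using assms by (auto simp: above_def)
  have g: "gap X (insert t T') t = above {y\<in>X. y < t} T'"
    using assms by (auto simp: above_def gap_def)
  have p: "(\<Prod>x\<in>T'. moment (gap X (insert t T') x)) = (\<Prod>x\<in>T'. moment (gap {y\<in>X. y < t} T' x))"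
  proof (rule prod.cong[OF refl])
    fix x assume "x \<in> T'"
    then have "gap X (insert t T') x = gap {y\<in>X. y < t} T' x"
      using assms by (auto simp: gap_def)
    then show "moment (gap X (insert t T') x) = moment (gap {y\<in>X. y < t} T' x)" by simp
  qed
  show ?thesis unfolding expansion_weight_def a using assms(3) tT by (simp add: g p)
qed

lemma expansion_weight_split:
  assumes p: "p \<in> Y" and T1: "T1 \<subseteq> {y\<in>Y. y < p}" and T2: "T2 \<subseteq> {y\<in>Y. p < y}" and fY: "finite Y"
  shows "expansion_weight Y (T1 \<union> insert p T2) = expansion_weight {y\<in>Y. y < p} T1 * expansion_weight {y\<in>Y. p < y} T2"
proof -
  have H1: "\<And>x. x \<in> T1 \<Longrightarrow> x \<in> Y \<and> x < p" using T1 by blast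
  have H2: "\<And>x. x \<in> T2 \<Longrightarrow> x \<in> Y \<and> p < x" using T2 by blast
  have f1: "finite T1" by (rule finite_subset[OF T1]) (simp add: fY)
  have f2: "finite T2" by (rule finite_subset[OF T2]) (simp add: fY)
  have a: "above Y (T1 \<union> insert p T2) = above {y\<in>Y. p < y} T2"
    unfolding above_def using H1 by (auto intro: less_trans)
  have gp': "gap Y (T1 \<union> insert p T2) p = above {y\<in>Y. y < p} T1"
    unfolding above_def gap_def using H1 H2 by (auto dest: less_asym)
  have p1: "(\<Prod>x\<in>T1. moment (gap Y (T1 \<union> insert p T2) x)) = (\<Prod>x\<in>T1. moment (gap {y\<in>Y. y < p} T1 x))"
  proof (rule prod.cong[OF refl])
    fix x assume x: "x \<in> T1"
    have "gap Y (T1 \<union> insert p T2) x = gap {y\<in>Y. y < p} T1 x"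
      unfolding gap_def using H1[OF x] H2 by (auto dest: less_trans less_asym)
    then show "moment (gap Y (T1 \<union> insert p T2) x) = moment (gap {y\<in>Y. y < p} T1 x)" by simp
  qed
  have p2: "(\<Prod>x\<in>T2. moment (gap Y (T1 \<union> insert p T2) x)) = (\<Prod>x\<in>T2. moment (gap {y\<in>Y. p < y} T2 x))"
  proof (rule prod.cong[OF refl])
    fix x assume x: "x \<in> T2"
    have "gap Y (T1 \<union> insert p T2) x = gap {y\<in>Y. p < y} T2 x"
    proof
      show "gap Y (T1 \<union> insert p T2) x \<subseteq> gap {y\<in>Y. p < y} T2 x"
        unfolding gap_def using H2[OF x] by auto
      show "gap {y\<in>Y. p < y} T2 x \<subseteq> gap Y (T1 \<union> insert p T2) x"
        unfolding gap_def using H1 H2[OF x] by (auto intro: less_trans)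
    qed
    then show "moment (gap Y (T1 \<union> insert p T2) x) = moment (gap {y\<in>Y. p < y} T2 x)" by simp
  qed
  have d: "T1 \<inter> insert p T2 = {}" "p \<notin> T2" using H1 H2 by (auto dest: less_asym)
  have pe: "(\<Prod>x\<in>T1 \<union> insert p T2. moment (gap Y (T1 \<union> insert p T2) x)) =
      (\<Prod>x\<in>T1. moment (gap Y (T1 \<union> insert p T2) x)) * (moment (gap Y (T1 \<union> insert p T2) p) *
      (\<Prod>x\<in>T2. moment (gap Y (T1 \<union> insert p T2) x)))"
    using f1 f2 d by (simp add: prod.union_disjoint)
  show ?thesis unfolding expansion_weight_def a pe gp' p1 p2 by (simp only: mult_ac)
qed

lemma R_gamma_empty[simp]: "R_gamma {} v = v"
  by (simp add: R_gamma_def)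

lemma R_gamma_insert_Max:
  assumes "T' \<subseteq> {..<length ws}" "\<forall>x\<in>T'. x < t" "t < length ws"
  shows "R_gamma (insert t T') v = R_gamma T' (\<Lambda> (ws ! t) v) +
     (\<Sum>p\<in>T'. R_gamma {x\<in>T'. x < p} (\<gamma> (ws ! p * R_gamma {x\<in>T'. p < x} (ws ! t)) * v))"
proof -
  have fin: "finite T'" using assms finite_subset by blast
  have mx: "t = Max (insert t T')" using assms fin by (intro Max_eqI[symmetric]) auto
  have S: "insert t T' \<noteq> {}" "insert t T' \<subseteq> {..<length ws}" using assms by auto
  have rest: "insert t T' - {t} = T'" using assms by auto
  have low: "{x\<in>insert t T'. x < p} = {x\<in>T'. x < p}" if "p \<in> T'" for p
    using that assms(2) by auto
  have high: "{x\<in>insert t T'. p < x \<and> x < t} = {x\<in>T'. p < x}" for p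
    using assms(2) by auto
  have "R_gamma (insert t T') v = R_gamma T' (\<Lambda> (ws ! t) v) + (\<Sum>p\<in>T'.
      R_gamma {x\<in>insert t T'. x < p} (\<gamma> (ws ! p * R_gamma {x\<in>insert t T'. p < x \<and> x < t} (ws ! t)) * v))"
    unfolding R_gamma_def using Rprime_nths_rec[OF S mx] by (simp only: rest)
  also have "\<dots> = R_gamma T' (\<Lambda> (ws ! t) v) +
      (\<Sum>p\<in>T'. R_gamma {x\<in>T'. x < p} (\<gamma> (ws ! p * R_gamma {x\<in>T'. p < x} (ws ! t)) * v))"
    by (intro arg_cong2[where f="(+)"] refl sum.cong) (simp_all only: low high)
  finally show ?thesis .
qed

lemma R_gamma_add: "R_gamma T (a + b) = R_gamma T a + R_gamma T b" by (simp add: R_gamma_def Rprime_add)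
lemma R_gamma_smul: "R_gamma T (smul c a) = smul c (R_gamma T a)" by (simp add: R_gamma_def Rprime_smul)
lemma R_gamma_sum: "R_gamma T (sum f A) = (\<Sum>i\<in>A. R_gamma T (f i))" by (simp add: R_gamma_def Rprime_sum)

lemma R_expansion_add: "R_expansion X (a + b) = R_expansion X a + R_expansion X b"
  by (simp add: R_expansion_def R_gamma_add smul_add sum.distrib)
lemma R_expansion_smul: "R_expansion X (smul c a) = smul c (R_expansion X a)"
  by (simp add: R_expansion_def R_gamma_smul smul_smul smul_sum mult.commute)
lemma R_gamma_gamma_sum: "R_gamma T1 (\<gamma> (a * (\<Sum>i\<in>A. smul (c i) (x i))) * v) = (\<Sum>i\<in>A. smul (c i) (R_gamma T1 (\<gamma> (a * x i) * v)))"
  by (simp add: sum_distrib_left smul_mult_right gam_sum gam_smul sum_distrib_right smul_mult_left R_gamma_sum R_gamma_smul)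

lemma sum_Pow_R_gamma_split:
  assumes Y: "finite Y"
  shows "(\<Sum>T\<in>Pow Y. \<Sum>p\<in>T. smul (expansion_weight Y T)
            (R_gamma {x\<in>T. x < p} (\<gamma> (ws ! p * R_gamma {x\<in>T. p < x} w) * v)))
       = (\<Sum>p\<in>Y. R_expansion {y\<in>Y. y < p} (\<gamma> (ws ! p * R_expansion {y\<in>Y. p < y} w) * v))"
proof -
  have "(\<Sum>T\<in>Pow Y. \<Sum>p\<in>T. smul (expansion_weight Y T)
            (R_gamma {x\<in>T. x < p} (\<gamma> (ws ! p * R_gamma {x\<in>T. p < x} w) * v)))
      = (\<Sum>p\<in>Y. \<Sum>T1\<in>Pow {y\<in>Y. y < p}. \<Sum>T2\<in>Pow {y\<in>Y. p < y}.
           smul (expansion_weight Y (T1 \<union> insert p T2)) (R_gamma {x\<in>T1 \<union> insert p T2. x < p}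
             (\<gamma> (ws ! p * R_gamma {x\<in>T1 \<union> insert p T2. p < x} w) * v)))"
    by (rule sum_Pow_sum_member[OF Y])
  also have "\<dots> = (\<Sum>p\<in>Y. \<Sum>T1\<in>Pow {y\<in>Y. y < p}. \<Sum>T2\<in>Pow {y\<in>Y. p < y}.
           smul (expansion_weight {y\<in>Y. y < p} T1) (smul (expansion_weight {y\<in>Y. p < y} T2)
             (R_gamma T1 (\<gamma> (ws ! p * R_gamma T2 w) * v))))"
  proof (intro sum.cong refl)
    fix p T1 T2 assume p: "p \<in> Y" and T1: "T1 \<in> Pow {y\<in>Y. y < p}" and T2: "T2 \<in> Pow {y\<in>Y. p < y}"
    have "{x\<in>T1 \<union> insert p T2. x < p} = T1" "{x\<in>T1 \<union> insert p T2. p < x} = T2"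
      using T1 T2 by auto
    moreover have "expansion_weight Y (T1 \<union> insert p T2)
        = expansion_weight {y\<in>Y. y < p} T1 * expansion_weight {y\<in>Y. p < y} T2"
      by (rule expansion_weight_split) (use p T1 T2 Y in auto)
    ultimately show "smul (expansion_weight Y (T1 \<union> insert p T2)) (R_gamma {x\<in>T1 \<union> insert p T2. x < p}
          (\<gamma> (ws ! p * R_gamma {x\<in>T1 \<union> insert p T2. p < x} w) * v))
        = smul (expansion_weight {y\<in>Y. y < p} T1) (smul (expansion_weight {y\<in>Y. p < y} T2)
          (R_gamma T1 (\<gamma> (ws ! p * R_gamma T2 w) * v)))"
      by (simp add: smul_smul)
  qed
  also have "\<dots> = (\<Sum>p\<in>Y. R_expansion {y\<in>Y. y < p} (\<gamma> (ws ! p * R_expansion {y\<in>Y. p < y} w) * v))"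
    by (simp add: R_expansion_def R_gamma_gamma_sum smul_sum)
  finally show ?thesis .
qed

definition R_expansion_tail :: "nat set \<Rightarrow> nat \<Rightarrow> 'b \<Rightarrow> 'b" where
  "R_expansion_tail X t v = R_expansion {y\<in>X. y < t} (\<Lambda> (ws ! t) v) +
     (\<Sum>p\<in>{y\<in>X. y < t}. R_expansion {y\<in>X. y < p} (\<gamma> (ws ! p * R_expansion {y\<in>X. p < y \<and> y < t} (ws ! t)) * v))"

lemma R_expansion_tail_restrict:
  assumes "t < p"
  shows "R_expansion_tail {y\<in>X. y < p} t v = R_expansion_tail X t v"
proof -
  have below: "{y\<in>{y\<in>X. y < p}. y < t} = {y\<in>X. y < t}"
    and lower: "\<And>q. q \<in> {y\<in>X. y < t} \<Longrightarrow> {y\<in>{y\<in>X. y < p}. y < q} = {y\<in>X. y < q}"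
    and between: "\<And>q. {y\<in>{y\<in>X. y < p}. q < y \<and> y < t} = {y\<in>X. q < y \<and> y < t}"
    using assms by auto
  show ?thesis
    unfolding R_expansion_tail_def below by (intro arg_cong2[where f="(+)"] refl sum.cong) (simp_all only: lower between)
qed

lemma R_expansion_insert_Max:
  assumes X: "X \<subseteq> {..<length ws}" and t: "t \<in> X"
  shows "(\<Sum>T\<in>Pow {y\<in>X. y < t}. smul (expansion_weight X (insert t T)) (R_gamma (insert t T) v))
       = smul (moment {y\<in>X. t < y}) (R_expansion_tail X t v)"
proof -
  define Y where "Y = {y\<in>X. y < t}"
  have finY: "finite Y" using X finite_subset by (auto simp: Y_def)
  have "(\<Sum>T\<in>Pow Y. smul (expansion_weight X (insert t T)) (R_gamma (insert t T) v)) =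
      (\<Sum>T\<in>Pow Y. smul (moment {y\<in>X. t < y}) (smul (expansion_weight Y T) (R_gamma T (\<Lambda> (ws ! t) v)) +
         (\<Sum>p\<in>T. smul (expansion_weight Y T) (R_gamma {x\<in>T. x < p} (\<gamma> (ws ! p * R_gamma {x\<in>T. p < x} (ws ! t)) * v)))))"
  proof (rule sum.cong[OF refl])
    fix T assume T: "T \<in> Pow Y"
    have "finite T" using T finY by (auto intro: finite_subset)
    then have "expansion_weight X (insert t T) = moment {y\<in>X. t < y} * expansion_weight Y T"
      unfolding Y_def by (intro expansion_weight_insert_Max) (use t T in \<open>auto simp: Y_def\<close>)
    moreover have "R_gamma (insert t T) v = R_gamma T (\<Lambda> (ws ! t) v) +
        (\<Sum>p\<in>T. R_gamma {x\<in>T. x < p} (\<gamma> (ws ! p * R_gamma {x\<in>T. p < x} (ws ! t)) * v))"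
      by (rule R_gamma_insert_Max) (use T X t in \<open>auto simp: Y_def\<close>)
    ultimately show "smul (expansion_weight X (insert t T)) (R_gamma (insert t T) v) =
        smul (moment {y\<in>X. t < y}) (smul (expansion_weight Y T) (R_gamma T (\<Lambda> (ws ! t) v)) +
          (\<Sum>p\<in>T. smul (expansion_weight Y T) (R_gamma {x\<in>T. x < p} (\<gamma> (ws ! p * R_gamma {x\<in>T. p < x} (ws ! t)) * v))))"
      by (simp add: smul_smul smul_add smul_sum)
  qed
  also have "\<dots> = smul (moment {y\<in>X. t < y}) (R_expansion Y (\<Lambda> (ws ! t) v) +
      (\<Sum>T\<in>Pow Y. \<Sum>p\<in>T. smul (expansion_weight Y T) (R_gamma {x\<in>T. x < p} (\<gamma> (ws ! p * R_gamma {x\<in>T. p < x} (ws ! t)) * v))))"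
    by (simp add: smul_sum[symmetric] sum.distrib R_expansion_def)
  also have "\<dots> = smul (moment {y\<in>X. t < y}) (R_expansion_tail X t v)"
  proof -
    have "{y\<in>Y. y < p} = {y\<in>X. y < p}" "{y\<in>Y. p < y} = {y\<in>X. p < y \<and> y < t}" if "p \<in> Y" for p
      using that by (auto simp: Y_def)
    then show ?thesis
      unfolding sum_Pow_R_gamma_split[OF finY] R_expansion_tail_def Y_def[symmetric]
      by (simp cong: sum.cong)
  qed
  finally show ?thesis unfolding Y_def .
qed

lemma R_expansion_rec:
  assumes X: "X \<subseteq> {..<length ws}"
  shows "R_expansion X v = smul (moment X) v + (\<Sum>t\<in>X. smul (moment {y\<in>X. t < y}) (R_expansion_tail X t v))"
proof -
  have "R_expansion X v = smul (expansion_weight X {}) (R_gamma {} v) +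
      (\<Sum>t\<in>X. \<Sum>T\<in>Pow {y\<in>X. y < t}. smul (expansion_weight X (insert t T)) (R_gamma (insert t T) v))"
    unfolding R_expansion_def using X finite_subset by (intro sum_Pow_by_Max) auto
  then show ?thesis using R_expansion_insert_Max[OF X] by (simp add: expansion_weight_empty)
qed

lemma moment_above_rec:
  assumes X: "X \<subseteq> {..<length ws}" "X \<noteq> {}" and n: "n = Max X" and t: "t \<in> X - {n}"
    and between: "\<And>p. R_gp {y\<in>X. p < y \<and> y < n} (ws ! n) = R_expansion {y\<in>X. p < y \<and> y < n} (ws ! n)"
  shows "moment {y\<in>X. t < y} = (\<Sum>p\<in>{p\<in>X - {n}. t < p}.
      \<phi> (ws ! p * R_expansion {y\<in>X. p < y \<and> y < n} (ws ! n)) * moment {y\<in>X. t < y \<and> y < p})"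
proof -
  have fin: "finite X" using X finite_subset by blast
  have nX: "n \<in> X" and le_n: "\<And>x. x \<in> X \<Longrightarrow> x \<le> n" using fin X n by auto
  have tn: "t < n" using t le_n by force
  have "moment {y\<in>X. t < y} = (\<Sum>p\<in>{y\<in>X. t < y} - {n}.
      \<phi> (ws ! p * R_gp {x\<in>{y\<in>X. t < y}. p < x \<and> x < n} (ws ! n)) * moment {x\<in>{y\<in>X. t < y}. x < p})"
  proof (rule moment_rec)
    show "n = Max {y\<in>X. t < y}"
      using nX tn le_n fin by (intro Max_eqI[symmetric]) auto
  qed (use X nX tn in auto)
  also have "\<dots> = (\<Sum>p\<in>{p\<in>X - {n}. t < p}.
      \<phi> (ws ! p * R_expansion {y\<in>X. p < y \<and> y < n} (ws ! n)) * moment {y\<in>X. t < y \<and> y < p})"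
  proof (rule sum.cong)
    fix p assume "p \<in> {p\<in>X - {n}. t < p}"
    then have "{x\<in>{y\<in>X. t < y}. p < x \<and> x < n} = {y\<in>X. p < y \<and> y < n}" by auto
    moreover have "{x\<in>{y\<in>X. t < y}. x < p} = {y\<in>X. t < y \<and> y < p}" by auto
    ultimately show "\<phi> (ws ! p * R_gp {x\<in>{y\<in>X. t < y}. p < x \<and> x < n} (ws ! n)) * moment {x\<in>{y\<in>X. t < y}. x < p}
        = \<phi> (ws ! p * R_expansion {y\<in>X. p < y \<and> y < n} (ws ! n)) * moment {y\<in>X. t < y \<and> y < p}"
      by (simp add: between)
  qed auto
  finally show ?thesis .
qed

text \<open>The \<open>\<phi>\<close>-parts of \<open>\<gamma> + \<phi>\<close> in the recursion of \<open>R'\<close> reassemble into the moments: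
  this is where the moment recursion enters, with \<open>R_gp\<close> already identified with
  \<open>R_expansion\<close> on the sets strictly between \<open>p\<close> and the maximum.\<close>

lemma sum_phi_R_expansion:
  assumes X: "X \<subseteq> {..<length ws}" "X \<noteq> {}" and n: "n = Max X"
    and between: "\<And>p. R_gp {y\<in>X. p < y \<and> y < n} (ws ! n) = R_expansion {y\<in>X. p < y \<and> y < n} (ws ! n)"
  shows "(\<Sum>p\<in>X - {n}. smul (\<phi> (ws ! p * R_expansion {y\<in>X. p < y \<and> y < n} (ws ! n))) (R_expansion {y\<in>X. y < p} v))
       = smul (moment X) v + (\<Sum>t\<in>X - {n}. smul (moment {y\<in>X. t < y}) (R_expansion_tail X t v))"
proof -
  define fp where "fp p = \<phi> (ws ! p * R_expansion {y\<in>X. p < y \<and> y < n} (ws ! n))" for p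
  have fin: "finite X" using X finite_subset by blast
  have nX: "n \<in> X" and le_n: "\<And>x. x \<in> X \<Longrightarrow> x \<le> n" using fin X n by auto
  have less_n: "p < n" if "p \<in> X - {n}" for p using that le_n by force
  have total: "(\<Sum>p\<in>X - {n}. fp p * moment {y\<in>X. y < p}) = moment X"
    using moment_rec[OF X(2,1) n] by (simp add: fp_def between)
  have inner: "(\<Sum>p\<in>{p\<in>X - {n}. t < p}. smul (fp p * moment {y\<in>X. t < y \<and> y < p}) (R_expansion_tail X t v))
      = smul (moment {y\<in>X. t < y}) (R_expansion_tail X t v)" if t: "t \<in> X - {n}" for t
    using moment_above_rec[OF X n t between] by (simp add: fp_def smul_sum_left)
  have "(\<Sum>p\<in>X - {n}. smul (fp p) (R_expansion {y\<in>X. y < p} v)) =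
      (\<Sum>p\<in>X - {n}. smul (fp p * moment {y\<in>X. y < p}) v +
        (\<Sum>t\<in>{t\<in>X - {n}. t < p}. smul (fp p * moment {y\<in>X. t < y \<and> y < p}) (R_expansion_tail X t v)))"
  proof (rule sum.cong[OF refl])
    fix p assume p: "p \<in> X - {n}"
    have "R_expansion {y\<in>X. y < p} v = smul (moment {y\<in>X. y < p}) v +
        (\<Sum>t\<in>{y\<in>X. y < p}. smul (moment {y\<in>{y\<in>X. y < p}. t < y}) (R_expansion_tail {y\<in>X. y < p} t v))"
      by (rule R_expansion_rec) (use X in auto)
    also have "(\<Sum>t\<in>{y\<in>X. y < p}. smul (moment {y\<in>{y\<in>X. y < p}. t < y}) (R_expansion_tail {y\<in>X. y < p} t v))
        = (\<Sum>t\<in>{t\<in>X - {n}. t < p}. smul (moment {y\<in>X. t < y \<and> y < p}) (R_expansion_tail X t v))"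
    proof (rule sum.cong)
      fix t assume "t \<in> {t\<in>X - {n}. t < p}"
      moreover have "{y\<in>{y\<in>X. y < p}. t < y} = {y\<in>X. t < y \<and> y < p}" by auto
      ultimately show "smul (moment {y\<in>{y\<in>X. y < p}. t < y}) (R_expansion_tail {y\<in>X. y < p} t v)
          = smul (moment {y\<in>X. t < y \<and> y < p}) (R_expansion_tail X t v)"
        by (simp only: R_expansion_tail_restrict mem_Collect_eq)
    qed (use less_n[OF p] in auto)
    finally show "smul (fp p) (R_expansion {y\<in>X. y < p} v) =
        smul (fp p * moment {y\<in>X. y < p}) v +
        (\<Sum>t\<in>{t\<in>X - {n}. t < p}. smul (fp p * moment {y\<in>X. t < y \<and> y < p}) (R_expansion_tail X t v))"
      by (simp add: smul_add smul_sum smul_smul)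
  qed
  also have "\<dots> = smul (\<Sum>p\<in>X - {n}. fp p * moment {y\<in>X. y < p}) v +
      (\<Sum>t\<in>X - {n}. \<Sum>p\<in>{p\<in>X - {n}. t < p}. smul (fp p * moment {y\<in>X. t < y \<and> y < p}) (R_expansion_tail X t v))"
    using sum.swap_restrict[of "X - {n}" "X - {n}"
        "\<lambda>p t. smul (fp p * moment {y\<in>X. t < y \<and> y < p}) (R_expansion_tail X t v)" "\<lambda>p t. t < p"] fin
    by (simp add: sum.distrib smul_sum_left)
  also have "\<dots> = smul (moment X) v + (\<Sum>t\<in>X - {n}. smul (moment {y\<in>X. t < y}) (R_expansion_tail X t v))"
    unfolding total by (rule arg_cong2[where f="(+)"], rule refl, rule sum.cong[OF refl inner])
  finally show ?thesis by (simp add: fp_def)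
qed

theorem R_gp_eq_R_expansion:
  assumes "X \<subseteq> {..<length ws}"
  shows "R_gp X v = R_expansion X v"
  using assms
proof (induct "card X" arbitrary: X v rule: less_induct)
  case less
  have X: "X \<subseteq> {..<length ws}" by (rule less.prems)
  have fin: "finite X" using X finite_subset by blast
  have IH: "R_gp Z y = R_expansion Z y" if "Z \<subseteq> X" "Z \<noteq> X" for Z y
    using less.hyps[of Z] that X fin by (meson psubsetI psubset_card_mono subset_trans)
  show ?case
  proof (cases "X = {}")
    case True
    then show ?thesis by (simp add: R_gp_def R_expansion_def expansion_weight_def above_def)
  next
    case False
    define n where "n = Max X"
    have nX: "n \<in> X" and less_n: "\<And>p. p \<in> X - {n} \<Longrightarrow> p < n"
      using False fin by (auto simp: n_def order.not_eq_order_implies_strict)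
    have below: "{y\<in>X. y < n} = X - {n}" using less_n nX by auto
    have above_n: "{y\<in>X. n < y} = {}" using less_n by force
    have between: "R_gp {y\<in>X. p < y \<and> y < n} w = R_expansion {y\<in>X. p < y \<and> y < n} w" for p w
      by (rule IH) (use nX in auto)
    have rest: "R_gp (X - {n}) w = R_expansion (X - {n}) w" for w
      by (rule IH) (use nX in auto)
    have lower: "R_gp {y\<in>X. y < p} w = R_expansion {y\<in>X. y < p} w" if "p \<in> X" "p \<noteq> n" for p w
      by (rule IH) (use that nX less_n in auto)
    have "R_gp X v = R_gp (X - {n}) (\<Lambda> (ws ! n) v) +
       (\<Sum>p\<in>X - {n}. R_gp {y\<in>X. y < p} (G (ws ! p * R_gp {y\<in>X. p < y \<and> y < n} (ws ! n)) * v))"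
      unfolding R_gp_def by (rule Rprime_nths_rec[OF False X n_def])
    also have "\<dots> = R_expansion (X - {n}) (\<Lambda> (ws ! n) v) +
       (\<Sum>p\<in>X - {n}. R_expansion {y\<in>X. y < p} (G (ws ! p * R_expansion {y\<in>X. p < y \<and> y < n} (ws ! n)) * v))"
      unfolding rest by (intro arg_cong2[where f="(+)"] refl sum.cong) (auto simp: lower between)
    also have "\<dots> = R_expansion_tail X n v +
       (\<Sum>p\<in>X - {n}. smul (\<phi> (ws ! p * R_expansion {y\<in>X. p < y \<and> y < n} (ws ! n))) (R_expansion {y\<in>X. y < p} v))"
      by (simp add: R_expansion_tail_def below gp_mult R_expansion_add R_expansion_smul sum.distrib add.assoc)
    also have "\<dots> = R_expansion X v"
      using sum_phi_R_expansion[OF X False n_def between] R_expansion_rec[OF X, of v] fin nX above_n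
      by (simp add: sum.remove below add_ac)
    finally show ?thesis .
  qed
qed

section \<open>The moment-cumulant formula\<close>

definition cumulant_formula_on :: "nat set \<Rightarrow> complex" where "cumulant_formula_on V = cumulant_formula (nths ws V)"

lemma cumulant_formula_on_singleton: "n < length ws \<Longrightarrow> cumulant_formula_on {n} = 0"
  by (simp add: cumulant_formula_on_def cumulant_formula_def nths_singleton_index)

lemma cumulant_formula_on_insert2:
  assumes pn: "p < n" and T: "\<forall>x\<in>T. p < x \<and> x < n" and nl: "n < length ws"
  shows "cumulant_formula_on (insert n (insert p T)) = \<phi> (ws ! p * R_gamma T (ws ! n))"
proof -
  have e: "insert n (insert p T) = {p} \<union> (T \<union> {n})" by auto
  have u1: "nths ws ({p} \<union> (T \<union> {n})) = nths ws {p} @ nths ws (T \<union> {n})"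
    by (rule nths_union_ordered) (use T pn in auto)
  have u2: "nths ws (T \<union> {n}) = nths ws T @ nths ws {n}"
    by (rule nths_union_ordered) (use T in auto)
  have "nths ws (insert n (insert p T)) = nths ws {p} @ (nths ws T @ nths ws {n})"
    unfolding e u1 u2 ..
  also have "\<dots> = [ws ! p] @ nths ws T @ [ws ! n]" using pn nl by (simp add: nths_singleton_index)
  finally have "nths ws (insert n (insert p T)) = ws ! p # (nths ws T @ [ws ! n])" by simp
  then show ?thesis by (simp add: cumulant_formula_on_def cumulant_formula_def R_gamma_def)
qed

lemma nc_sum_max_block_term:
  assumes S: "S \<subseteq> {..<length ws}" and n: "n = Max S" and p: "p \<in> S - {n}"
    and T: "T \<subseteq> {x\<in>S. p < x \<and> x < n}"
    and IH: "\<And>Z. Z \<subseteq> S \<Longrightarrow> n \<notin> Z \<Longrightarrow> nc_sum cumulant_formula_on Z = moment Z"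
  shows "cumulant_formula_on (insert n (insert p T)) *
           (\<Prod>x\<in>insert n (insert p T). nc_sum cumulant_formula_on (gap S (insert n (insert p T)) x))
       = moment {x\<in>S. x < p} * (expansion_weight {x\<in>S. p < x \<and> x < n} T * \<phi> (ws ! p * R_gamma T (ws ! n)))"
proof -
  define Gp where "Gp = {x\<in>S. p < x \<and> x < n}"
  define V where "V = insert n (insert p T)"
  have fin: "finite S" using S finite_subset by blast
  have nS: "n \<in> S" using p fin n by (metis DiffD1 Max_in empty_iff)
  have "p \<le> n" using p fin n by simp
  then have pn: "p < n" using p by auto
  have Tp: "\<forall>x\<in>T. p < x \<and> x < n" using T by auto
  have fT: "finite T" using T fin by (auto intro: finite_subset)
  have "gap S V n = above Gp T" "gap S V p = {x\<in>S. x < p}" "\<And>x. x \<in> T \<Longrightarrow> gap S V x = gap Gp T x"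
    unfolding gap_def above_def V_def Gp_def using Tp pn by (auto intro!: set_eqI)
  moreover have "nc_sum cumulant_formula_on (above Gp T) = moment (above Gp T)"
    "nc_sum cumulant_formula_on {x\<in>S. x < p} = moment {x\<in>S. x < p}"
    "\<And>x. nc_sum cumulant_formula_on (gap Gp T x) = moment (gap Gp T x)"
    using pn by (auto intro!: IH simp: above_def gap_def Gp_def)
  moreover have "n \<notin> insert p T" "p \<notin> T" using Tp pn by auto
  ultimately have "(\<Prod>x\<in>V. nc_sum cumulant_formula_on (gap S V x))
      = moment (above Gp T) * (moment {x\<in>S. x < p} * (\<Prod>x\<in>T. moment (gap Gp T x)))"
    unfolding V_def using fT by simp
  moreover have "cumulant_formula_on V = \<phi> (ws ! p * R_gamma T (ws ! n))"
    unfolding V_def using pn Tp nS S by (intro cumulant_formula_on_insert2) auto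
  ultimately show ?thesis unfolding V_def Gp_def expansion_weight_def by (simp add: mult_ac)
qed

text \<open>The moment-cumulant formula for the candidate cumulants: peeling off the block of the
  maximum leaves exactly the moment recursion, once the sum over the blocks with fixed second
  element \<open>p\<close> is recognised as \<open>R_expansion\<close>.\<close>

theorem nc_sum_cumulant_formula_eq_moment:
  assumes "S \<subseteq> {..<length ws}"
  shows "nc_sum cumulant_formula_on S = moment S"
  using assms
proof (induct "card S" arbitrary: S rule: less_induct)
  case less
  have S: "S \<subseteq> {..<length ws}" by (rule less.prems)
  have fin: "finite S" using S finite_subset by blast
  show ?case
  proof (cases "S = {}")
    case False
    define n where "n = Max S"
    have nS: "n \<in> S" and le: "\<And>x. x \<in> S \<Longrightarrow> x \<le> n" using fin False by (auto simp: n_def)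
    have IH: "nc_sum cumulant_formula_on Z = moment Z" if "Z \<subseteq> S" "n \<notin> Z" for Z
      using less.hyps[of Z] that S nS fin by (metis psubsetI psubset_card_mono subset_trans)
    define h where "h T = cumulant_formula_on (insert n T) *
        (\<Prod>x\<in>insert n T. nc_sum cumulant_formula_on (gap S (insert n T) x))" for T
    have "nc_sum cumulant_formula_on S = h {} + (\<Sum>p\<in>S - {n}. \<Sum>T\<in>Pow {y\<in>S - {n}. p < y}. h (insert p T))"
      unfolding nc_sum_by_max_block[OF fin False n_def] h_def[symmetric] using fin by (intro sum_Pow_by_Min) simp
    also have "h {} = 0" using nS S by (simp add: h_def cumulant_formula_on_singleton subset_iff)
    also have "(\<Sum>p\<in>S - {n}. \<Sum>T\<in>Pow {y\<in>S - {n}. p < y}. h (insert p T)) =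
       (\<Sum>p\<in>S - {n}. \<phi> (ws ! p * R_gp {x\<in>S. p < x \<and> x < n} (ws ! n)) * moment {x\<in>S. x < p})"
    proof (rule sum.cong[OF refl])
      fix p assume p: "p \<in> S - {n}"
      have Gp: "{y\<in>S - {n}. p < y} = {x\<in>S. p < x \<and> x < n}" using le by force
      have "(\<Sum>T\<in>Pow {x\<in>S. p < x \<and> x < n}. h (insert p T)) = moment {x\<in>S. x < p} *
          \<phi> (ws ! p * R_expansion {x\<in>S. p < x \<and> x < n} (ws ! n))"
        using nc_sum_max_block_term[OF S n_def p _ IH]
        by (simp add: h_def R_expansion_def sum_distrib_left phi_sum smul_mult_right phi_smul mult_ac)
      moreover have "R_gp {x\<in>S. p < x \<and> x < n} (ws ! n) = R_expansion {x\<in>S. p < x \<and> x < n} (ws ! n)"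
        by (rule R_gp_eq_R_expansion) (use S in auto)
      ultimately show "(\<Sum>T\<in>Pow {y\<in>S - {n}. p < y}. h (insert p T)) =
          \<phi> (ws ! p * R_gp {x\<in>S. p < x \<and> x < n} (ws ! n)) * moment {x\<in>S. x < p}"
        unfolding Gp by simp
    qed
    also have "\<dots> = moment S" by (rule moment_rec[OF False S n_def, symmetric])
    finally show ?thesis by simp
  qed simp
qed
end

lemma (in fock_setting) psi_eq_nc_sum_cumulant_formula:
  "psi smul star \<gamma> \<phi> (foldr (\<circ>) (map X_op vs) id)
     = (\<Sum>P\<in>NC (length vs). \<Prod>V\<in>P. cumulant_formula (nths vs V))"
proof -
  interpret fock_word smul star \<phi> \<gamma> \<Lambda> vs by (simp add: fock_word_def fock_setting_axioms)
  have "psi smul star \<gamma> \<phi> (foldr (\<circ>) (map X_op vs) id) = moment {0..<length vs}"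
    by (simp add: psi_def moment_def omega_coeff_def omega_coeff_vec_def vac_def atLeast0LessThan)
  also have "\<dots> = nc_sum cumulant_formula_on {0..<length vs}"
    by (rule nc_sum_cumulant_formula_eq_moment[symmetric]) auto
  finally show ?thesis by (simp add: nc_sum_def cumulant_formula_on_def NC_eq_NC_on)
qed

theorem lemma3p11:
  fixes smul :: "complex \<Rightarrow> 'b::ring_1 \<Rightarrow> 'b"
    and star :: "'b \<Rightarrow> 'b"
    and \<phi> :: "'b \<Rightarrow> complex"
    and \<gamma> :: "'b \<Rightarrow> 'b"
    and \<Lambda> :: "'b \<Rightarrow> 'b \<Rightarrow> 'b"
    and R :: "('b fvec \<Rightarrow> 'b fvec) list \<Rightarrow> complex"
    and u1 un :: 'b
    and us :: "'b list"
  assumes alg: "unital_star_algebra smul star"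
    and phi_lin: "star_linear_functional smul star \<phi>"
    and gamma_lin: "star_linear_map smul star \<gamma>"
    and Lambda_lin: "star_bilinear_map smul star \<Lambda>"
    and phi_pos: "positive_faithful star \<phi>"
    and cp: "completely_positive star (gp smul \<gamma> \<phi>)"
    and sym_phi: "\<forall>b u v. \<phi> (star v * \<Lambda> b u) = \<phi> (star (\<Lambda> (star b) v) * u)"
    and sym_gamma: "\<forall>b u v. \<gamma> (star v * \<Lambda> b u) = \<gamma> (star (\<Lambda> (star b) v) * u)"
    and cumulants: "\<forall>Ys. Ys \<noteq> [] \<longrightarrow>
        psi smul star \<gamma> \<phi> (foldr (\<circ>) Ys id) = (\<Sum>P\<in>NC (length Ys). \<Prod>V\<in>P. R (nths Ys V))"
  shows "R (map (Xop smul \<gamma> \<phi> \<Lambda>) (u1 # us @ [un]))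
           = ip_phi star \<phi> (Rprime \<Lambda> \<gamma> us un) (star u1)
       \<and> ip_phi star \<phi> (Rprime \<Lambda> \<gamma> us un) (star u1) = \<phi> (u1 * Rprime \<Lambda> \<gamma> us un)"
proof -
  \<comment> \<open>Positivity and the symmetry of \<open>\<Lambda>\<close> make the form an inner product and \<open>X(b)\<close> symmetric;
    the computation of the cumulants does not need them.\<close>
  interpret fock_setting smul star \<phi> \<gamma> \<Lambda>
    using alg phi_lin gamma_lin Lambda_lin by (rule fock_setting.intro)
  have "R (map X_op (u1 # us @ [un])) = cumulant_formula (u1 # us @ [un])"
  proof (rule free_cumulants_unique[where R = "\<lambda>xs. R (map X_op xs)"])
    fix xs :: "'b list"
    assume "xs \<noteq> []"
    then show "(\<Sum>P\<in>NC (length xs). \<Prod>V\<in>P. R (map X_op (nths xs V)))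
        = (\<Sum>P\<in>NC (length xs). \<Prod>V\<in>P. cumulant_formula (nths xs V))"
      using cumulants psi_eq_nc_sum_cumulant_formula[of xs] by (simp add: nths_map)
  qed simp
  then show ?thesis by (simp add: cumulant_formula_def ip_phi_def)
qed

end
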